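(* In the model described in the context with full channel state information at the sensors, the antenna gain satisfies $$G_{\rm CSIS}(N)\le \zeta\,\frac{\mathcal{E}_{\rm CSIS}(N)}{\mathcal{E}_{\rm AWGN}(1)}\le \zeta\min\left[\frac{N(z+1)}{Nz+1},\ (z+1)\frac{NK+1}{K+1}\right],$$ where $z:=\gamma_{\rm c}/(p_1\gamma_{\rm s}+1)$.
   Context: Model: $L$ sensors observe $\Theta\in\{0,\theta\}$, $\theta>0$, with prior $P(\Theta=\theta)=p_1\in(0,1)$. Sensor $l$ observes $x_l=\Theta+\eta_l$, $\eta_l\sim\mathcal{CN}(0,\sigma_\eta^2)$ i.i.d., applies a complex gain $\alpha_l$, and transmits over a multiple-access channel to a fusion center with $N$ antennas, receiving $\mathbf{y}=\mathbf{H}\boldsymbol{\alpha}\Theta+\mathbf{H}\mathbf{D}(\boldsymbol{\alpha})\boldsymbol{\eta}+\boldsymbol{\nu}$, where $\mathbf{H}$ is $N\times L$ with i.i.d. entries $h_{nl}=\sqrt{K/(K+1)}+\frac{1}{\sqrt{K+1}}h^{\rm diff}_{nl}$, $h^{\rm diff}_{nl}$ i.i.d. zero-mean with unit second moment, $K\ge0$; $\mathbf{D}(\boldsymbol\alpha)=\mathrm{diag}(\boldsymbol\alpha)$; $\boldsymbol\nu\sim\mathcal{CN}(\mathbf 0,\sigma_\nu^2\mathbf I_N)$ independent of $\boldsymbol\eta$. Let $\mathbf{R}(\boldsymbol{\alpha})=\sigma_\eta^2\mathbf{H}\mathbf{D}(\boldsymbol{\alpha})\mathbf{D}(\boldsymbol{\alpha})^H\mathbf{H}^H+\sigma_\nu^2\mathbf{I}_N$,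 power constraint $\|\boldsymbol\alpha\|^2\le P:=P_T/(p_1\theta^2+\sigma_\eta^2)$, $P_T>0$. Sensing SNR $\gamma_{\rm s}=\theta^2/\sigma_\eta^2$, channel SNR $\gamma_{\rm c}=P_T/\sigma_\nu^2$. With full CSI at the sensors, $\boldsymbol\alpha_{\rm OPT}$ maximizes $\boldsymbol\alpha^H\mathbf{H}^H\mathbf{R}(\boldsymbol\alpha)^{-1}\mathbf{H}\boldsymbol\alpha$ subject to $\|\boldsymbol\alpha\|^2\le P$, and $\mathcal{E}_{\rm CSIS}(N)=\lim_{L\to\infty}\frac{\theta^2}{8}\frac1L\boldsymbol\alpha_{\rm OPT}^H\mathbf{H}^H\mathbf{R}(\boldsymbol\alpha_{\rm OPT})^{-1}\mathbf{H}\boldsymbol\alpha_{\rm OPT}$ (limit in probability); this is the error exponent $\lim_{L\to\infty}-\frac1L\log P_{e|\mathbf H}(N)$ of the Bayesian test at the fusion center. The antenna gain is $G_{\rm CSIS}(N)=\mathcal{E}_{\rm CSIS}(N)/\mathcal{E}_{\rm CSIS}(1)$. Further, $\mathcal{E}_{\rm AWGN}(1)=\frac18\frac{\gamma_{\rm c}\gamma_{\rm s}}{\gamma_{\rm c}+p_1\gamma_{\rm s}+1}$ is the error exponent for $N=1$ with all channels equal to $1$, and $\zeta=(E[|h_{nl}|])^{-2}$. *)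

theory Defs
  imports "HOL-Probability.Probability"
begin

text \<open>Matrices/vectors of varying size are represented as functions on nat,
  only the entries with indices below the stated dimensions matter.
  A channel matrix H (N x L) is H :: nat => nat => complex, H n l for n < N, l < L.\<close>

definition Hvec :: "nat \<Rightarrow> (nat \<Rightarrow> nat \<Rightarrow> complex) \<Rightarrow> (nat \<Rightarrow> complex) \<Rightarrow> nat \<Rightarrow> complex" where
  "Hvec L H \<alpha> n = (\<Sum>l<L. H n l * \<alpha> l)"

text \<open>R(alpha) = s_eta * H D(alpha) D(alpha)^H H^H + s_nu * I_N, with s_eta, s_nu the
  noise variances sigma_eta^2, sigma_nu^2.\<close>
definition Rmat :: "real \<Rightarrow> real \<Rightarrow> nat \<Rightarrow> (nat \<Rightarrow> nat \<Rightarrow> complex) \<Rightarrow> (nat \<Rightarrow> complex)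
    \<Rightarrow> nat \<Rightarrow> nat \<Rightarrow> complex" where
  "Rmat s_eta s_nu L H \<alpha> n m =
     complex_of_real s_eta * (\<Sum>l<L. H n l * \<alpha> l * cnj (\<alpha> l) * cnj (H m l))
     + (if n = m then complex_of_real s_nu else 0)"

definition mat_inv_apply :: "nat \<Rightarrow> (nat \<Rightarrow> nat \<Rightarrow> complex) \<Rightarrow> (nat \<Rightarrow> complex) \<Rightarrow> nat \<Rightarrow> complex" where
  "mat_inv_apply N R v = (THE x. (\<forall>n<N. (\<Sum>m<N. R n m * x m) = v n) \<and> (\<forall>n\<ge>N. x n = 0))"

definition csis_obj :: "nat \<Rightarrow> nat \<Rightarrow> real \<Rightarrow> real \<Rightarrow> (nat \<Rightarrow> nat \<Rightarrow> complex) \<Rightarrow> (nat \<Rightarrow> complex) \<Rightarrow> real" where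
  "csis_obj N L s_eta s_nu H \<alpha> =
     Re (\<Sum>n<N. cnj (Hvec L H \<alpha> n) * mat_inv_apply N (Rmat s_eta s_nu L H \<alpha>) (Hvec L H \<alpha>) n)"

definition csis_opt_value :: "nat \<Rightarrow> nat \<Rightarrow> real \<Rightarrow> real \<Rightarrow> real \<Rightarrow> (nat \<Rightarrow> nat \<Rightarrow> complex) \<Rightarrow> real" where
  "csis_opt_value N L s_eta s_nu P H =
     (SUP \<alpha> \<in> {\<alpha>. (\<Sum>l<L. (cmod (\<alpha> l))\<^sup>2) \<le> P}. csis_obj N L s_eta s_nu H \<alpha>)"

definition conv_in_prob :: "'a measure \<Rightarrow> (nat \<Rightarrow> 'a \<Rightarrow> real) \<Rightarrow> real \<Rightarrow> bool" where
  "conv_in_prob M X c \<longleftrightarrow> (\<forall>L. X L \<in> borel_measurable M) \<and>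
     (\<forall>\<epsilon>>0. (\<lambda>L. measure M {\<omega> \<in> space M. \<bar>X L \<omega> - c\<bar> > \<epsilon>}) \<longlonglongrightarrow> 0)"

end

theory Submission
  imports Defs "Jordan_Normal_Form.Determinant"
begin

text \<open>For fixed gains \<open>\<alpha>\<close> put \<open>x = R(\<alpha>)\<^sup>-\<^sup>1 H\<alpha>\<close>. The objective equals both \<open>x\<^sup>H R(\<alpha>) x\<close> and
  \<open>\<alpha>\<^sup>H H\<^sup>H x\<close>, and Cauchy--Schwarz applied to the second form in two ways bounds it by
  \<open>L U / (\<sigma>\<^sub>\<eta>\<^sup>2 U + \<sigma>\<^sub>\<nu>\<^sup>2 L)\<close> with \<open>U = \<parallel>H\<alpha>\<parallel>\<^sup>2\<close>. The entries of the Gram matrix \<open>H H\<^sup>H / L\<close>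
  converge in probability to \<open>K/(K+1)\<close> off and to \<open>1\<close> on the diagonal, so asymptotically
  \<open>U \<le> P L c\<close> with \<open>c = (NK+1)/(K+1) \<le> N\<close>; in terms of \<open>E_AWGN(1)\<close> this gives both terms of
  the minimum. For one antenna, the matched filter \<open>\<alpha>\<^sub>l \<sim> conj(sgn h\<^sub>l)\<close> with equal powers and
  the law of large numbers give \<open>E_CSIS(1) \<ge> E_AWGN(1) (E|h|)\<^sup>2 = E_AWGN(1) / \<zeta>\<close>, which is the
  first inequality.\<close>

section \<open>The objective\<close>

lemma Rmat_quadratic_form:
  fixes H :: "nat \<Rightarrow> nat \<Rightarrow> complex" and \<alpha> d :: "nat \<Rightarrow> complex"
  shows "(\<Sum>n<N. cnj (d n) * (\<Sum>m<N. Rmat se sn L H \<alpha> n m * d m)) =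
     of_real (se * (\<Sum>l<L. (cmod (\<alpha> l))\<^sup>2 * (cmod (\<Sum>n<N. cnj (d n) * H n l))\<^sup>2)
        + sn * (\<Sum>n<N. (cmod (d n))\<^sup>2))"
proof -
  have expand: "(\<Sum>n<N. cnj (d n) * (\<Sum>m<N. Rmat se sn L H \<alpha> n m * d m)) =
     of_real se * (\<Sum>n<N. \<Sum>m<N. \<Sum>l<L. cnj (d n) * H n l * \<alpha> l * cnj (\<alpha> l) * cnj (H m l) * d m)
     + of_real sn * (\<Sum>n<N. cnj (d n) * d n)"
  proof -
    have row: "(\<Sum>m<N. Rmat se sn L H \<alpha> n m * d m) = of_real se * (\<Sum>m<N. \<Sum>l<L. H n l * \<alpha> l * cnj (\<alpha> l) * cnj (H m l) * d m) + of_real sn * d n"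
      if "n < N" for n
    proof -
      have "(\<Sum>m<N. Rmat se sn L H \<alpha> n m * d m) = (\<Sum>m<N. of_real se * (\<Sum>l<L. H n l * \<alpha> l * cnj (\<alpha> l) * cnj (H m l) * d m)) + (\<Sum>m<N. (if n = m then of_real sn else 0) * d m)"
        unfolding Rmat_def by (simp add: ring_distribs sum.distrib sum_distrib_right sum_distrib_left mult.assoc)
      also have "(\<Sum>m<N. (if n = m then of_real sn else 0) * d m) = of_real sn * d n"
        using that by (subst sum.cong[OF refl, of _ _ "\<lambda>m. if n = m then of_real sn * d m else 0"]) (auto simp: sum.delta)
      finally show ?thesis by (simp add: sum_distrib_left)
    qed
    have "(\<Sum>n<N. cnj (d n) * (\<Sum>m<N. Rmat se sn L H \<alpha> n m * d m)) =
       (\<Sum>n<N. cnj (d n) * (of_real se * (\<Sum>m<N. \<Sum>l<L. H n l * \<alpha> l * cnj (\<alpha> l) * cnj (H m l) * d m) + of_real sn * d n))"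
      by (rule sum.cong) (auto simp: row)
    also have "\<dots> = of_real se * (\<Sum>n<N. \<Sum>m<N. \<Sum>l<L. cnj (d n) * H n l * \<alpha> l * cnj (\<alpha> l) * cnj (H m l) * d m)
     + of_real sn * (\<Sum>n<N. cnj (d n) * d n)"
      by (simp add: ring_distribs sum.distrib sum_distrib_left mult_ac)
    finally show ?thesis .
  qed
  have regroup: "(\<Sum>n<N. \<Sum>m<N. \<Sum>l<L. cnj (d n) * H n l * \<alpha> l * cnj (\<alpha> l) * cnj (H m l) * d m)
     = (\<Sum>l<L. (\<alpha> l * cnj (\<alpha> l)) * ((\<Sum>n<N. cnj (d n) * H n l) * cnj (\<Sum>n<N. cnj (d n) * H n l)))"
  proof -
    have "(\<Sum>l<L. (\<alpha> l * cnj (\<alpha> l)) * ((\<Sum>n<N. cnj (d n) * H n l) * cnj (\<Sum>n<N. cnj (d n) * H n l)))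
      = (\<Sum>l<L. \<Sum>n<N. \<Sum>m<N. cnj (d n) * H n l * \<alpha> l * cnj (\<alpha> l) * cnj (H m l) * d m)"
      by (simp add: sum_distrib_left sum_distrib_right mult_ac)
    also have "\<dots> = (\<Sum>n<N. \<Sum>l<L. \<Sum>m<N. cnj (d n) * H n l * \<alpha> l * cnj (\<alpha> l) * cnj (H m l) * d m)"
      by (rule sum.swap)
    also have "\<dots> = (\<Sum>n<N. \<Sum>m<N. \<Sum>l<L. cnj (d n) * H n l * \<alpha> l * cnj (\<alpha> l) * cnj (H m l) * d m)"
      by (rule sum.cong[OF refl], rule sum.swap)
    finally show ?thesis by simp
  qed
  show ?thesis
    unfolding expand regroup of_real_add of_real_mult of_real_sum complex_norm_square by (simp add: sum_distrib_left mult.commute)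
qed

lemma Rmat_injective:
  assumes "se \<ge> 0" "sn > 0"
    and "\<And>n. n < N \<Longrightarrow> (\<Sum>m<N. Rmat se sn L H \<alpha> n m * d m) = 0" "n < N"
  shows "d n = 0"
proof -
  have "of_real (se * (\<Sum>l<L. (cmod (\<alpha> l))\<^sup>2 * (cmod (\<Sum>n<N. cnj (d n) * H n l))\<^sup>2)
        + sn * (\<Sum>n<N. (cmod (d n))\<^sup>2)) = (0 :: complex)"
    unfolding Rmat_quadratic_form[symmetric] using assms(3) by simp
  then have "se * (\<Sum>l<L. (cmod (\<alpha> l))\<^sup>2 * (cmod (\<Sum>n<N. cnj (d n) * H n l))\<^sup>2)
        + sn * (\<Sum>n<N. (cmod (d n))\<^sup>2) = 0"
    by (simp only: of_real_eq_0_iff)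
  moreover have "se * (\<Sum>l<L. (cmod (\<alpha> l))\<^sup>2 * (cmod (\<Sum>n<N. cnj (d n) * H n l))\<^sup>2) \<ge> 0"
    using assms(1) by (intro mult_nonneg_nonneg sum_nonneg) auto
  moreover have "(\<Sum>n<N. (cmod (d n))\<^sup>2) \<ge> 0" by (intro sum_nonneg) auto
  ultimately have "(\<Sum>n<N. (cmod (d n))\<^sup>2) = 0"
    using assms(2) by (smt (verit) mult_pos_pos)
  then show ?thesis
    using assms(4) by (simp add: sum_nonneg_eq_0_iff)
qed

lemma Rmat_solvable:
  assumes se: "se \<ge> 0" and sn: "sn > 0"
  shows "\<exists>x. (\<forall>n<N. (\<Sum>m<N. Rmat se sn L H \<alpha> n m * x m) = u n) \<and> (\<forall>n\<ge>N. x n = 0)"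
proof -
  define R where "R = Rmat se sn L H \<alpha>"
  define A :: "complex Matrix.mat" where "A = Matrix.mat N N (\<lambda>(i,j). R i j)"
  have A: "A \<in> carrier_mat N N" unfolding A_def by auto
  have mult_vec: "(A *\<^sub>v v) $ n = (\<Sum>m<N. R n m * v $ m)" if "n < N" "v \<in> carrier_vec N" for v n
    using that unfolding A_def
    by (auto simp: scalar_prod_def atLeast0LessThan intro!: sum.cong)
  have "Determinant.det A \<noteq> 0"
  proof
    assume "Determinant.det A = 0"
    then obtain v where v: "v \<in> carrier_vec N" "v \<noteq> 0\<^sub>v N" "A *\<^sub>v v = 0\<^sub>v N"
      using det_0_iff_vec_prod_zero_field[OF A] by auto
    define d where "d n = (if n < N then v $ n else 0)" for n
    have "(\<Sum>m<N. R n m * d m) = 0" if "n < N" for n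
      using mult_vec[OF that v(1)] v(3) that by (simp add: d_def)
    then have "d n = 0" if "n < N" for n
      using Rmat_injective[OF se sn _ that] unfolding R_def by blast
    then have "v = 0\<^sub>v N" using v(1) by (intro eq_vecI) (auto simp: d_def)
    with v(2) show False by simp
  qed
  from det_non_zero_imp_unit[OF A this, of "()"]
  obtain B where B: "B \<in> carrier_mat N N" "A * B = 1\<^sub>m N"
    unfolding Units_def ring_mat_def by auto
  define w where "w = B *\<^sub>v Matrix.vec N u"
  have w: "w \<in> carrier_vec N" using B unfolding w_def by auto
  have Aw: "A *\<^sub>v w = Matrix.vec N u"
    unfolding w_def using B A by (subst assoc_mult_mat_vec[symmetric]) auto
  define x where "x n = (if n < N then w $ n else 0)" for n
  have "(\<Sum>m<N. R n m * x m) = u n" if "n < N" for n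
    using mult_vec[OF that w] Aw that by (simp add: x_def)
  then show ?thesis unfolding R_def by (intro exI[of _ x]) (auto simp: x_def)
qed

lemma mat_inv_apply_Rmat:
  assumes se: "se \<ge> 0" and sn: "sn > 0"
  shows "\<And>n. n < N \<Longrightarrow> (\<Sum>m<N. Rmat se sn L H \<alpha> n m * mat_inv_apply N (Rmat se sn L H \<alpha>) u m) = u n"
    and "\<And>n. n \<ge> N \<Longrightarrow> mat_inv_apply N (Rmat se sn L H \<alpha>) u n = 0"
proof -
  have "\<exists>!x. (\<forall>n<N. (\<Sum>m<N. Rmat se sn L H \<alpha> n m * x m) = u n) \<and> (\<forall>n\<ge>N. x n = 0)"
  proof (rule ex_ex1I)
    fix x y
    assume x: "(\<forall>n<N. (\<Sum>m<N. Rmat se sn L H \<alpha> n m * x m) = u n) \<and> (\<forall>n\<ge>N. x n = 0)"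
      and y: "(\<forall>n<N. (\<Sum>m<N. Rmat se sn L H \<alpha> n m * y m) = u n) \<and> (\<forall>n\<ge>N. y n = 0)"
    have "x n - y n = 0" if "n < N" for n
      using x y that
      by (intro Rmat_injective[OF se sn, of N L H \<alpha> "\<lambda>m. x m - y m"])
        (simp_all add: right_diff_distrib sum_subtractf)
    then show "x = y" using x y by (intro ext) (metis eq_iff_diff_eq_0 not_less)
  qed (rule Rmat_solvable[OF se sn])
  from theI'[OF this] show "\<And>n. n < N \<Longrightarrow> (\<Sum>m<N. Rmat se sn L H \<alpha> n m * mat_inv_apply N (Rmat se sn L H \<alpha>) u m) = u n"
    and "\<And>n. n \<ge> N \<Longrightarrow> mat_inv_apply N (Rmat se sn L H \<alpha>) u n = 0"
    unfolding mat_inv_apply_def by auto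
qed
lemma cmod_sum_mult_power2_le:
  fixes a b :: "nat \<Rightarrow> complex"
  shows "(cmod (\<Sum>i\<in>I. a i * b i))\<^sup>2 \<le> (\<Sum>i\<in>I. (cmod (a i))\<^sup>2) * (\<Sum>i\<in>I. (cmod (b i))\<^sup>2)"
proof -
  have "cmod (\<Sum>i\<in>I. a i * b i) \<le> (\<Sum>i\<in>I. cmod (a i) * cmod (b i))"
    by (rule order_trans[OF norm_sum]) (simp add: norm_mult)
  then have "(cmod (\<Sum>i\<in>I. a i * b i))\<^sup>2 \<le> (\<Sum>i\<in>I. cmod (a i) * cmod (b i))\<^sup>2"
    by (intro power_mono) auto
  also have "\<dots> \<le> (\<Sum>i\<in>I. (cmod (a i))\<^sup>2) * (\<Sum>i\<in>I. (cmod (b i))\<^sup>2)"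
    by (rule Cauchy_Schwarz_ineq_sum)
  finally show ?thesis .
qed

lemma mult_le_of_power2_le_both:
  fixes q S X U L se sn :: real
  assumes "se \<ge> 0" "sn \<ge> 0" "U \<ge> 0" "L \<ge> 0"
    and q: "q = se * S + sn * X" "q \<ge> 0" "q\<^sup>2 \<le> L * S" "q\<^sup>2 \<le> U * X"
  shows "q * (se * U + sn * L) \<le> L * U"
proof (cases "q = 0")
  case False
  then have "q > 0" using q(2) by simp
  have "q * (q * (se * U + sn * L)) = se * U * q\<^sup>2 + sn * L * q\<^sup>2"
    by (simp add: algebra_simps power2_eq_square)
  also have "\<dots> \<le> se * U * (L * S) + sn * L * (U * X)"
    using assms by (intro add_mono mult_left_mono) auto
  also have "\<dots> = q * (L * U)" unfolding q(1) by (simp add: algebra_simps)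
  finally show ?thesis using \<open>q > 0\<close> by simp
qed (use assms in simp)

lemma csis_obj_bounds:
  fixes N L :: nat and H :: "nat \<Rightarrow> nat \<Rightarrow> complex" and \<alpha> :: "nat \<Rightarrow> complex"
  assumes se: "se > 0" and sn: "sn > 0"
  defines "U \<equiv> \<Sum>n<N. (cmod (Hvec L H \<alpha> n))\<^sup>2"
  shows "0 \<le> csis_obj N L se sn H \<alpha>"
    and "csis_obj N L se sn H \<alpha> * (se * U + sn * real L) \<le> real L * U"
proof -
  define u where "u = Hvec L H \<alpha>"
  define x where "x = mat_inv_apply N (Rmat se sn L H \<alpha>) u"
  define X where "X = (\<Sum>n<N. (cmod (x n))\<^sup>2)"
  define t where "t l = (\<Sum>n<N. cnj (x n) * H n l)" for l
  define S where "S = (\<Sum>l<L. (cmod (\<alpha> l))\<^sup>2 * (cmod (t l))\<^sup>2)"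
  define Q where "Q = (\<Sum>n<N. cnj (u n) * x n)"
  have "(\<Sum>n<N. cnj (x n) * u n) = (\<Sum>n<N. cnj (x n) * (\<Sum>m<N. Rmat se sn L H \<alpha> n m * x m))"
    using mat_inv_apply_Rmat(1)[OF less_imp_le[OF se] sn, where N=N and L=L and H=H and \<alpha>=\<alpha> and u=u] unfolding x_def by simp
  also have "\<dots> = of_real (se * S + sn * X)"
    unfolding Rmat_quadratic_form S_def X_def t_def ..
  finally have "(\<Sum>n<N. cnj (x n) * u n) = of_real (se * S + sn * X)" .
  moreover have "Q = cnj (\<Sum>n<N. cnj (x n) * u n)"
    unfolding Q_def by (simp add: mult.commute)
  ultimately have Q_eq: "Q = of_real (se * S + sn * X)" by simp
  have obj: "csis_obj N L se sn H \<alpha> = se * S + sn * X"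
    unfolding csis_obj_def using Q_eq unfolding Q_def u_def x_def by simp
  have q0: "se * S + sn * X \<ge> 0"
    unfolding S_def X_def using se sn by (intro add_nonneg_nonneg mult_nonneg_nonneg sum_nonneg) auto
  then show "0 \<le> csis_obj N L se sn H \<alpha>" unfolding obj .
  have Q_alt: "Q = (\<Sum>l<L. 1 * (cnj (\<alpha> l) * cnj (t l)))"
    unfolding Q_def u_def Hvec_def t_def
    by (simp add: sum_distrib_left sum_distrib_right mult_ac sum.swap[of _ "{..<N}"])
  have Q_sq: "(cmod Q)\<^sup>2 = (se * S + sn * X)\<^sup>2"
    unfolding Q_eq norm_of_real using q0 by simp
  have "(se * S + sn * X)\<^sup>2 \<le> (\<Sum>l<L. (cmod (1::complex))\<^sup>2) * (\<Sum>l<L. (cmod (cnj (\<alpha> l) * cnj (t l)))\<^sup>2)"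
    unfolding Q_sq[symmetric] Q_alt by (rule cmod_sum_mult_power2_le)
  then have CS_alpha: "(se * S + sn * X)\<^sup>2 \<le> real L * S"
    unfolding S_def by (simp add: norm_mult power_mult_distrib)
  have "(se * S + sn * X)\<^sup>2 \<le> (\<Sum>n<N. (cmod (cnj (u n)))\<^sup>2) * X"
    unfolding Q_sq[symmetric] unfolding Q_def X_def by (rule cmod_sum_mult_power2_le)
  then have CS_x: "(se * S + sn * X)\<^sup>2 \<le> U * X"
    unfolding U_def u_def by simp
  show "csis_obj N L se sn H \<alpha> * (se * U + sn * real L) \<le> real L * U"
    unfolding obj using se sn CS_alpha CS_x q0
    by (intro mult_le_of_power2_le_both) (auto simp: U_def sum_nonneg)
qed

lemma frac_mono_pos:
  fixes a b x y :: real
  assumes "0 \<le> x" "x \<le> y" "a \<ge> 0" "b > 0"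
  shows "x / (a * x + b) \<le> y / (a * y + b)"
proof -
  have "x * (a * y + b) \<le> y * (a * x + b)"
    using assms by (simp add: algebra_simps mult_left_mono)
  moreover have "a * x + b > 0" "a * y + b > 0"
    using assms by (auto intro!: add_nonneg_pos)
  ultimately show ?thesis by (simp add: divide_le_eq le_divide_eq mult.commute)
qed

lemma csis_obj_le_frac:
  fixes N L :: nat and H :: "nat \<Rightarrow> nat \<Rightarrow> complex" and \<alpha> :: "nat \<Rightarrow> complex"
  assumes se: "se > 0" and sn: "sn > 0" and L: "L > 0"
  defines "U \<equiv> \<Sum>n<N. (cmod (Hvec L H \<alpha> n))\<^sup>2"
  shows "csis_obj N L se sn H \<alpha> \<le> real L * (U / (se * U + sn * real L))"
proof -
  have "se * U + sn * real L > 0"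
    using se sn L unfolding U_def by (intro add_nonneg_pos mult_nonneg_nonneg sum_nonneg) auto
  with csis_obj_bounds(2)[OF se sn, of N L H \<alpha>] show ?thesis
    unfolding U_def by (simp add: pos_le_divide_eq)
qed

lemma csis_obj_le_const:
  assumes se: "se > 0" and sn: "sn > 0" and L: "L > 0"
  shows "csis_obj N L se sn H \<alpha> \<le> real L / se"
proof -
  define U where "U = (\<Sum>n<N. (cmod (Hvec L H \<alpha> n))\<^sup>2)"
  have "U \<ge> 0" unfolding U_def by (intro sum_nonneg) auto
  then have "U / (se * U + sn * real L) \<le> 1 / se"
    using se sn L by (simp add: divide_le_eq field_simps add_nonneg_pos)
  then have "real L * (U / (se * U + sn * real L)) \<le> real L * (1 / se)"
    by (intro mult_left_mono) auto
  then have "real L * (U / (se * U + sn * real L)) \<le> real L / se" by simp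
  with csis_obj_le_frac[OF se sn L, of N H \<alpha>] show ?thesis
    unfolding U_def by linarith
qed

lemma csis_obj_le_opt_value:
  assumes se: "se > 0" and sn: "sn > 0" and L: "L > 0"
    and "(\<Sum>l<L. (cmod (\<alpha> l))\<^sup>2) \<le> P"
  shows "csis_obj N L se sn H \<alpha> \<le> csis_opt_value N L se sn P H"
  unfolding csis_opt_value_def
  by (rule cSUP_upper) (use assms csis_obj_le_const[OF se sn L] in \<open>auto intro!: bdd_aboveI2\<close>)

lemma csis_opt_value_le:
  assumes "P \<ge> 0"
    and "\<And>\<alpha>. (\<Sum>l<L. (cmod (\<alpha> l))\<^sup>2) \<le> P \<Longrightarrow> csis_obj N L se sn H \<alpha> \<le> B"
  shows "csis_opt_value N L se sn P H \<le> B"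
  unfolding csis_opt_value_def
  by (rule cSUP_least) (use assms in \<open>auto intro!: exI[of _ "\<lambda>_. 0"]\<close>)

lemma csis_opt_value_nonneg:
  assumes se: "se > 0" and sn: "sn > 0" and L: "L > 0" and P: "P \<ge> 0"
  shows "csis_opt_value N L se sn P H \<ge> 0"
  using csis_obj_le_opt_value[OF se sn L, of "\<lambda>_. 0" P N H] csis_obj_bounds(1)[OF se sn, of N L H "\<lambda>_. 0"] P
  by simp
lemma gram_quadratic_form_le:
  fixes H :: "nat \<Rightarrow> nat \<Rightarrow> complex" and u :: "nat \<Rightarrow> complex" and b e :: real
  assumes b: "b \<ge> 0" and e: "e \<ge> 0"
    and gram: "\<And>n m. n < N \<Longrightarrow> m < N \<Longrightarrow>
      cmod (\<Sum>l<L. cnj (H n l) * H m l) \<le> real L * (b + (if n = m then e else 0))"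
  shows "(\<Sum>l<L. (cmod (\<Sum>n<N. cnj (H n l) * u n))\<^sup>2) \<le> real L * (real N * b + e) * (\<Sum>n<N. (cmod (u n))\<^sup>2)"
proof -
  define G where "G n m = (\<Sum>l<L. cnj (H n l) * H m l)" for n m
  define U where "U = (\<Sum>n<N. (cmod (u n))\<^sup>2)"
  have "of_real (\<Sum>l<L. (cmod (\<Sum>n<N. cnj (H n l) * u n))\<^sup>2) = (\<Sum>n<N. \<Sum>m<N. u n * cnj (u m) * G n m)"
    unfolding of_real_sum complex_norm_square G_def
    by (simp add: sum_distrib_left sum_distrib_right mult_ac sum.swap[of _ "{..<L}"])
      (rule sum.cong[OF refl], rule sum.swap)
  then have "(\<Sum>l<L. (cmod (\<Sum>n<N. cnj (H n l) * u n))\<^sup>2) = cmod (\<Sum>n<N. \<Sum>m<N. u n * cnj (u m) * G n m)"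
    by (metis (no_types, lifting) norm_of_real abs_of_nonneg sum_nonneg zero_le_power2)
  also have "\<dots> \<le> (\<Sum>n<N. \<Sum>m<N. cmod (u n) * cmod (u m) * (real L * (b + (if n = m then e else 0))))"
  proof -
    have entry: "cmod (u n * cnj (u m) * G n m) \<le> cmod (u n) * cmod (u m) * (real L * (b + (if n = m then e else 0)))"
      if "n < N" "m < N" for n m
      using mult_left_mono[OF gram[OF that], of "cmod (u n) * cmod (u m)"] by (simp add: norm_mult G_def)
    have "cmod (\<Sum>n<N. \<Sum>m<N. u n * cnj (u m) * G n m) \<le> (\<Sum>n<N. \<Sum>m<N. cmod (u n * cnj (u m) * G n m))"
      by (rule order_trans[OF norm_sum], intro sum_mono norm_sum)
    also have "\<dots> \<le> (\<Sum>n<N. \<Sum>m<N. cmod (u n) * cmod (u m) * (real L * (b + (if n = m then e else 0))))"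
      by (intro sum_mono entry) auto
    finally show ?thesis .
  qed
  also have "\<dots> = (\<Sum>n<N. \<Sum>m<N. real L * b * (cmod (u n) * cmod (u m)))
      + (\<Sum>n<N. \<Sum>m<N. (if n = m then real L * e * (cmod (u n) * cmod (u m)) else 0))"
    by (simp only: sum.distrib[symmetric]) (intro sum.cong refl, simp add: algebra_simps)
  also have "\<dots> = real L * (b * (\<Sum>n<N. cmod (u n))\<^sup>2 + e * U)"
    unfolding U_def power2_eq_square
    by (simp add: sum_distrib_left sum_distrib_right mult_ac sum.delta algebra_simps)
  also have "\<dots> \<le> real L * (b * (real N * U) + e * U)"
    using Cauchy_Schwarz_ineq_sum[of "\<lambda>_. 1" "\<lambda>n. cmod (u n)" "{..<N}"] b e
    unfolding U_def by (intro mult_left_mono add_mono) auto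
  finally show ?thesis unfolding U_def by (simp add: algebra_simps)
qed

text \<open>\<open>\<parallel>H\<alpha>\<parallel>\<^sup>2 = \<alpha>\<^sup>H (H\<^sup>H H\<alpha>) \<le> \<parallel>\<alpha>\<parallel> \<parallel>H\<^sup>H H\<alpha>\<parallel>\<close>, and \<open>\<parallel>H\<^sup>H v\<parallel>\<^sup>2\<close> is the quadratic form of the Gram
  matrix \<open>H H\<^sup>H\<close> at \<open>v = H\<alpha>\<close>.\<close>

lemma Hvec_norm_le_gram:
  fixes H :: "nat \<Rightarrow> nat \<Rightarrow> complex" and b e :: real
  assumes b: "b \<ge> 0" and e: "e \<ge> 0"
    and gram: "\<And>n m. n < N \<Longrightarrow> m < N \<Longrightarrow>
      cmod (\<Sum>l<L. cnj (H n l) * H m l) \<le> real L * (b + (if n = m then e else 0))"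
  shows "(\<Sum>n<N. (cmod (Hvec L H \<alpha> n))\<^sup>2) \<le> (\<Sum>l<L. (cmod (\<alpha> l))\<^sup>2) * (real L * (real N * b + e))"
proof -
  define u where "u = Hvec L H \<alpha>"
  define U where "U = (\<Sum>n<N. (cmod (u n))\<^sup>2)"
  define A where "A = (\<Sum>l<L. (cmod (\<alpha> l))\<^sup>2)"
  define s where "s l = (\<Sum>n<N. cnj (H n l) * u n)" for l
  have U0: "U \<ge> 0" unfolding U_def by (intro sum_nonneg) auto
  have "of_real U = (\<Sum>l<L. \<alpha> l * cnj (s l))"
    unfolding U_def of_real_sum complex_norm_square s_def u_def Hvec_def
    by (simp add: sum_distrib_left sum_distrib_right mult_ac sum.swap[of _ "{..<N}"])
      (rule sum.cong[OF refl], rule sum.swap)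
  then have "U\<^sup>2 = (cmod (\<Sum>l<L. \<alpha> l * cnj (s l)))\<^sup>2"
    by (metis U0 abs_of_nonneg norm_of_real)
  also have "\<dots> \<le> A * (\<Sum>l<L. (cmod (s l))\<^sup>2)"
    unfolding A_def using cmod_sum_mult_power2_le[of \<alpha> "\<lambda>l. cnj (s l)" "{..<L}"] by simp
  also have "\<dots> \<le> A * (real L * (real N * b + e) * U)"
    unfolding s_def U_def using gram_quadratic_form_le[OF b e gram]
    by (intro mult_left_mono) (auto simp: A_def sum_nonneg)
  finally have "U * U \<le> U * (A * (real L * (real N * b + e)))"
    by (simp add: power2_eq_square mult_ac)
  then have "U \<le> A * (real L * (real N * b + e))"
    using U0 b e by (cases "U = 0") (auto simp: A_def sum_nonneg)
  then show ?thesis unfolding U_def u_def A_def .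
qed

lemma csis_opt_value_le_gram:
  fixes H :: "nat \<Rightarrow> nat \<Rightarrow> complex" and b e :: real
  assumes se: "se > 0" and sn: "sn > 0" and L: "L > 0" and P: "P \<ge> 0"
    and b: "b \<ge> 0" and e: "e \<ge> 0"
    and gram: "\<And>n m. n < N \<Longrightarrow> m < N \<Longrightarrow>
      cmod (\<Sum>l<L. cnj (H n l) * H m l) \<le> real L * (b + (if n = m then e else 0))"
  defines "c \<equiv> real N * b + e"
  shows "csis_opt_value N L se sn P H / real L \<le> min (P * c / (se * (P * c) + sn)) (P * c / sn)"
proof -
  have c: "c \<ge> 0" unfolding c_def using b e by simp
  have "csis_obj N L se sn H \<alpha> \<le> real L * min (P * c / (se * (P * c) + sn)) (P * c / sn)"
    if \<alpha>: "(\<Sum>l<L. (cmod (\<alpha> l))\<^sup>2) \<le> P" for \<alpha>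
  proof -
    define U where "U = (\<Sum>n<N. (cmod (Hvec L H \<alpha> n))\<^sup>2)"
    have U0: "U \<ge> 0" unfolding U_def by (intro sum_nonneg) auto
    have "U \<le> (\<Sum>l<L. (cmod (\<alpha> l))\<^sup>2) * (real L * c)"
      unfolding U_def c_def by (rule Hvec_norm_le_gram[OF b e gram])
    also have "\<dots> \<le> real L * (P * c)"
      using mult_right_mono[OF \<alpha>, of "real L * c"] c by (simp add: mult_ac)
    finally have U: "U \<le> real L * (P * c)" .
    have obj: "csis_obj N L se sn H \<alpha> \<le> real L * (U / (se * U + sn * real L))"
      unfolding U_def by (rule csis_obj_le_frac[OF se sn L])
    have "U / (se * U + sn * real L) \<le> real L * (P * c) / (se * (real L * (P * c)) + sn * real L)"
      using U U0 se sn L by (intro frac_mono_pos) auto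
    also have "\<dots> = (real L * (P * c)) / (real L * (se * (P * c) + sn))"
      by (simp add: algebra_simps)
    also have "\<dots> = P * c / (se * (P * c) + sn)"
      using L by simp
    finally have bound1: "U / (se * U + sn * real L) \<le> P * c / (se * (P * c) + sn)" .
    have "U / (se * U + sn * real L) \<le> U / (sn * real L)"
      using U0 se sn L by (intro divide_left_mono) (auto intro!: mult_pos_pos add_nonneg_pos)
    also have "\<dots> \<le> P * c / sn"
      using U sn L by (simp add: divide_le_eq field_simps)
    finally have bound2: "U / (se * U + sn * real L) \<le> P * c / sn" .
    from obj bound1 bound2 show ?thesis
      by (smt (verit) L min.bounded_iff mult_left_mono of_nat_0_le_iff)
  qed
  then have "csis_opt_value N L se sn P H \<le> real L * min (P * c / (se * (P * c) + sn)) (P * c / sn)"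
    by (rule csis_opt_value_le[OF P])
  then show ?thesis
    using L by (subst pos_divide_le_eq) (simp_all only: of_nat_0_less_iff mult.commute)
qed

lemma csis_obj_single_antenna:
  assumes se: "se > 0" and sn: "sn > 0"
  shows "csis_obj 1 L se sn H \<alpha> = (cmod (Hvec L H \<alpha> 0))\<^sup>2 /
     (se * (\<Sum>l<L. (cmod (H 0 l))\<^sup>2 * (cmod (\<alpha> l))\<^sup>2) + sn)"
proof -
  define D where "D = se * (\<Sum>l<L. (cmod (H 0 l))\<^sup>2 * (cmod (\<alpha> l))\<^sup>2) + sn"
  have D0: "D > 0" unfolding D_def using se sn
    by (intro add_nonneg_pos mult_nonneg_nonneg sum_nonneg) auto
  define x where "x = mat_inv_apply 1 (Rmat se sn L H \<alpha>) (Hvec L H \<alpha>)"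
  have "Rmat se sn L H \<alpha> 0 0 * x 0 = Hvec L H \<alpha> 0"
    using mat_inv_apply_Rmat(1)[OF less_imp_le[OF se] sn, where N=1] unfolding x_def by simp
  moreover have "Rmat se sn L H \<alpha> 0 0 = of_real D"
    unfolding Rmat_def D_def of_real_add of_real_mult of_real_sum
    by (simp only: complex_norm_square) (simp add: mult_ac)
  ultimately have x0: "x 0 = Hvec L H \<alpha> 0 / of_real D"
    using D0 by (simp add: field_simps)
  have "csis_obj 1 L se sn H \<alpha> = Re (cnj (Hvec L H \<alpha> 0) * Hvec L H \<alpha> 0 / of_real D)"
    unfolding csis_obj_def x_def[symmetric] using x0 by simp
  also have "\<dots> = (cmod (Hvec L H \<alpha> 0))\<^sup>2 / D"
    by (simp add: mult.commute[of "cnj _"] complex_norm_square[symmetric] Re_divide_of_real)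
  finally show ?thesis unfolding D_def .
qed

lemma mult_cnj_sgn: "z * cnj (sgn z) = of_real (cmod z)"
proof (cases "z = 0")
  case False
  have "z * cnj (sgn z) = z * cnj z / of_real (cmod z)"
    by (simp add: sgn_div_norm divide_inverse scaleR_conv_of_real mult_ac)
  also have "\<dots> = of_real (cmod z)"
    using False by (simp add: complex_norm_square[symmetric] power2_eq_square)
  finally show ?thesis .
qed simp

text \<open>The matched filter \<open>\<alpha>\<^sub>l = c \<cdot> conj(sgn h\<^sub>0\<^sub>l)\<close> with equal power on every sensor.\<close>

lemma csis_opt_value_single_antenna_ge:
  assumes se: "se > 0" and sn: "sn > 0" and L: "L > 0" and P: "P \<ge> 0"
  shows "P * ((\<Sum>l<L. cmod (H 0 l)) / real L)\<^sup>2 / (se * P * ((\<Sum>l<L. (cmod (H 0 l))\<^sup>2) / real L) + sn)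
     \<le> csis_opt_value 1 L se sn P H / real L"
proof -
  define c where "c = sqrt (P / real L)"
  have c0: "c \<ge> 0" unfolding c_def using P by simp
  have c2: "c\<^sup>2 = P / real L" unfolding c_def using P by simp
  define \<alpha> where "\<alpha> l = of_real c * cnj (sgn (H 0 l))" for l
  have cmod_\<alpha>: "cmod (\<alpha> l) = (if H 0 l = 0 then 0 else c)" for l
    unfolding \<alpha>_def using c0 by (simp add: norm_mult norm_sgn)
  have "(\<Sum>l<L. (cmod (\<alpha> l))\<^sup>2) \<le> (\<Sum>l<L. c\<^sup>2)"
    by (intro sum_mono) (auto simp: cmod_\<alpha>)
  also have "\<dots> = P" using c2 L by simp
  finally have \<alpha>_P: "(\<Sum>l<L. (cmod (\<alpha> l))\<^sup>2) \<le> P" .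
  have Hvec: "Hvec L H \<alpha> 0 = of_real (c * (\<Sum>l<L. cmod (H 0 l)))"
    unfolding Hvec_def \<alpha>_def
    by (simp add: mult.left_commute[of "H 0 _"] mult_cnj_sgn sum_distrib_left)
  have den: "(\<Sum>l<L. (cmod (H 0 l))\<^sup>2 * (cmod (\<alpha> l))\<^sup>2) = c\<^sup>2 * (\<Sum>l<L. (cmod (H 0 l))\<^sup>2)"
    by (simp add: sum_distrib_left cmod_\<alpha>) (intro sum.cong refl, auto)
  have "csis_obj 1 L se sn H \<alpha> =
      c\<^sup>2 * (\<Sum>l<L. cmod (H 0 l))\<^sup>2 / (se * (c\<^sup>2 * (\<Sum>l<L. (cmod (H 0 l))\<^sup>2)) + sn)"
    unfolding csis_obj_single_antenna[OF se sn] Hvec den norm_of_real by (simp add: power_mult_distrib)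
  then have "P * ((\<Sum>l<L. cmod (H 0 l)) / real L)\<^sup>2 / (se * P * ((\<Sum>l<L. (cmod (H 0 l))\<^sup>2) / real L) + sn)
      = csis_obj 1 L se sn H \<alpha> / real L"
    unfolding c2 using L by (simp add: field_simps power2_eq_square)
  also have "\<dots> \<le> csis_opt_value 1 L se sn P H / real L"
    using csis_obj_le_opt_value[OF se sn L \<alpha>_P] L by (simp add: divide_right_mono)
  finally show ?thesis .
qed
section \<open>Weak laws of large numbers\<close>

lemma integral_comp_eq_of_distr_eq:
  fixes f :: "'b \<Rightarrow> 'c::{banach, second_countable_topology}"
  assumes "distr M N X = distr M N Y" "X \<in> measurable M N" "Y \<in> measurable M N" "f \<in> borel_measurable N"
  shows "integral\<^sup>L M (\<lambda>\<omega>. f (X \<omega>)) = integral\<^sup>L M (\<lambda>\<omega>. f (Y \<omega>))"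
  using integral_distr[of X M N f] integral_distr[of Y M N f] assms by simp

lemma integrable_comp_iff_of_distr_eq:
  fixes f :: "'b \<Rightarrow> 'c::{banach, second_countable_topology}"
  assumes "distr M N X = distr M N Y" "X \<in> measurable M N" "Y \<in> measurable M N" "f \<in> borel_measurable N"
  shows "integrable M (\<lambda>\<omega>. f (X \<omega>)) \<longleftrightarrow> integrable M (\<lambda>\<omega>. f (Y \<omega>))"
  using integrable_distr_eq[of X M N f] integrable_distr_eq[of Y M N f] assms by simp

lemma distr_comp_eq_of_distr_eq:
  assumes "distr M N X = distr M N Y" "X \<in> measurable M N" "Y \<in> measurable M N" "f \<in> measurable N K"
  shows "distr M K (\<lambda>\<omega>. f (X \<omega>)) = distr M K (\<lambda>\<omega>. f (Y \<omega>))"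
  using distr_distr[of f N K X M] distr_distr[of f N K Y M] assms by (simp add: comp_def)

lemma (in prob_space) mean_of_iid_moments:
  fixes Y :: "nat \<Rightarrow> 'a \<Rightarrow> real"
  assumes meas[measurable]: "\<And>l. random_variable borel (Y l)"
    and ident: "\<And>l. distr M borel (Y l) = distr M borel (Y 0)"
    and indep: "\<And>l k. l \<noteq> k \<Longrightarrow> indep_var borel (Y l) borel (Y k)"
    and sq: "integrable M (\<lambda>\<omega>. (Y 0 \<omega>)\<^sup>2)"
    and L: "L > 0"
  defines "f \<equiv> \<lambda>\<omega>. (\<Sum>l<L. Y l \<omega>) / real L"
  shows "integrable M (\<lambda>\<omega>. (f \<omega>)\<^sup>2)" and "expectation f = expectation (Y 0)"
    and "variance f = variance (Y 0) / real L"
proof -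
  define \<mu> where "\<mu> = expectation (Y 0)"
  define v where "v = variance (Y 0)"
  have same_integral: "integral\<^sup>L M (\<lambda>\<omega>. f (Y l \<omega>)) = integral\<^sup>L M (\<lambda>\<omega>. f (Y 0 \<omega>))"
    and same_integrable: "integrable M (\<lambda>\<omega>. f (Y l \<omega>)) \<longleftrightarrow> integrable M (\<lambda>\<omega>. f (Y 0 \<omega>))"
    if "f \<in> borel_measurable borel" for f :: "real \<Rightarrow> real" and l
    using integral_comp_eq_of_distr_eq[OF ident meas meas that]
      integrable_comp_iff_of_distr_eq[OF ident meas meas that] by auto
  have int_sq: "integrable M (\<lambda>\<omega>. (Y l \<omega>)\<^sup>2)" for l
    using same_integrable[of "\<lambda>x. x\<^sup>2" l] sq by simp
  have int: "integrable M (Y l)" for l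
    using int_sq[of l] by (rule square_integrable_imp_integrable[rotated]) simp
  have mean: "expectation (Y l) = \<mu>" for l
    using same_integral[of "\<lambda>x. x" l] unfolding \<mu>_def by simp
  define D where "D l \<omega> = Y l \<omega> - \<mu>" for l \<omega>
  have [measurable]: "D l \<in> borel_measurable M" for l unfolding D_def by measurable
  have int_D: "integrable M (D l)" for l unfolding D_def using int by simp
  have int_D2: "integrable M (\<lambda>\<omega>. D l \<omega> * D l \<omega>)" for l
    unfolding D_def using int_sq[of l] int[of l] by (simp add: algebra_simps power2_eq_square)
  have mean_D: "expectation (D l) = 0" for l
    unfolding D_def using int mean prob_space by simp
  have var_D: "expectation (\<lambda>\<omega>. D l \<omega> * D l \<omega>) = v" for l
    using same_integral[of "\<lambda>x. (x - \<mu>) * (x - \<mu>)" l]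
    unfolding D_def v_def \<mu>_def by (simp add: power2_eq_square)
  have indep_D: "indep_var borel (D l) borel (D k)" if "l \<noteq> k" for l k
    using indep_var_compose[OF indep[OF that], of "\<lambda>x. x - \<mu>" borel "\<lambda>x. x - \<mu>" borel]
    unfolding D_def comp_def by simp
  have cov_D: "expectation (\<lambda>\<omega>. D l \<omega> * D k \<omega>) = (if l = k then v else 0)" for l k
    using indep_var_lebesgue_integral[OF indep_D int_D int_D] mean_D var_D by auto
  have int_cov_D: "integrable M (\<lambda>\<omega>. D l \<omega> * D k \<omega>)" for l k
    using indep_var_integrable[OF indep_D int_D int_D] int_D2 by (cases "l = k") auto
  have [measurable]: "random_variable borel f" unfolding f_def by measurable
  have f_sq: "(f \<omega> - \<mu>)\<^sup>2 = (\<Sum>l<L. \<Sum>k<L. D l \<omega> * D k \<omega>) / (real L)\<^sup>2" for \<omega>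
  proof -
    have "f \<omega> - \<mu> = (\<Sum>l<L. D l \<omega>) / real L"
      unfolding f_def D_def using L by (simp add: sum_subtractf field_simps)
    then show ?thesis by (simp add: power_divide power2_eq_square sum_product)
  qed
  have int_f_sq: "integrable M (\<lambda>\<omega>. (f \<omega>)\<^sup>2)"
  proof -
    have "(\<lambda>\<omega>. (f \<omega>)\<^sup>2) = (\<lambda>\<omega>. (f \<omega> - \<mu>)\<^sup>2 + 2 * \<mu> * f \<omega> - \<mu>\<^sup>2)"
      by (auto simp: power2_eq_square algebra_simps)
    moreover have "integrable M f"
      unfolding f_def using int by auto
    ultimately show ?thesis
      unfolding f_sq using int_cov_D by auto
  qed
  have mean_f: "expectation f = \<mu>"
    unfolding f_def using mean int L by (simp add: Bochner_Integration.integral_sum)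
  have "variance f = (\<Sum>l<L. \<Sum>k<L. expectation (\<lambda>\<omega>. D l \<omega> * D k \<omega>)) / (real L)\<^sup>2"
    unfolding mean_f f_sq using int_cov_D
    by (simp add: Bochner_Integration.integral_sum Bochner_Integration.integrable_sum)
  also have "\<dots> = v / real L"
    unfolding cov_D using L by (simp add: power2_eq_square)
  finally have var_f: "variance f = v / real L" .
  show "integrable M (\<lambda>\<omega>. (f \<omega>)\<^sup>2)" "expectation f = expectation (Y 0)"
    "variance f = variance (Y 0) / real L"
    using int_f_sq mean_f var_f unfolding \<mu>_def v_def by simp_all
qed

lemma (in prob_space) prob_mean_deviation_le:
  fixes Y :: "nat \<Rightarrow> 'a \<Rightarrow> real"
  assumes meas[measurable]: "\<And>l. random_variable borel (Y l)"
    and ident: "\<And>l. distr M borel (Y l) = distr M borel (Y 0)"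
    and indep: "\<And>l k. l \<noteq> k \<Longrightarrow> indep_var borel (Y l) borel (Y k)"
    and sq: "integrable M (\<lambda>\<omega>. (Y 0 \<omega>)\<^sup>2)"
    and eps: "\<epsilon> > 0" and L: "L > 0"
  shows "prob {\<omega>\<in>space M. \<epsilon> \<le> \<bar>(\<Sum>l<L. Y l \<omega>) / real L - expectation (Y 0)\<bar>}
    \<le> variance (Y 0) / (real L * \<epsilon>\<^sup>2)"
proof -
  define f where "f = (\<lambda>\<omega>. (\<Sum>l<L. Y l \<omega>) / real L)"
  have [measurable]: "random_variable borel f" unfolding f_def by measurable
  have moments: "integrable M (\<lambda>\<omega>. (f \<omega>)\<^sup>2)" "expectation f = expectation (Y 0)"
    "variance f = variance (Y 0) / real L"
    using mean_of_iid_moments[where Y=Y and L=L, OF meas ident indep sq L] unfolding f_def by auto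
  have "prob {\<omega>\<in>space M. \<epsilon> \<le> \<bar>f \<omega> - expectation f\<bar>} \<le> variance f / \<epsilon>\<^sup>2"
    by (rule Chebyshev_inequality) (use moments(1) eps in auto)
  then show ?thesis
    unfolding moments(3) unfolding moments(2) unfolding f_def by (simp add: divide_divide_eq_left)
qed

lemma (in prob_space) weak_law_of_large_numbers_L2:
  fixes Y :: "nat \<Rightarrow> 'a \<Rightarrow> real"
  assumes "\<And>l. random_variable borel (Y l)"
    and "\<And>l. distr M borel (Y l) = distr M borel (Y 0)"
    and "\<And>l k. l \<noteq> k \<Longrightarrow> indep_var borel (Y l) borel (Y k)"
    and "integrable M (\<lambda>\<omega>. (Y 0 \<omega>)\<^sup>2)"
    and "\<epsilon> > 0"
  shows "(\<lambda>L. prob {\<omega>\<in>space M. \<epsilon> \<le> \<bar>(\<Sum>l<L. Y l \<omega>) / real L - expectation (Y 0)\<bar>}) \<longlonglongrightarrow> 0"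
proof (rule tendsto_sandwich[OF _ _ tendsto_const])
  show "\<forall>\<^sub>F L in sequentially. prob {\<omega>\<in>space M. \<epsilon> \<le> \<bar>(\<Sum>l<L. Y l \<omega>) / real L - expectation (Y 0)\<bar>}
      \<le> variance (Y 0) / \<epsilon>\<^sup>2 * inverse (real L)"
    using eventually_gt_at_top[of "0::nat"]
    by (rule eventually_mono) (use prob_mean_deviation_le[where Y=Y, OF assms] in \<open>simp add: field_simps\<close>)
  show "(\<lambda>L. variance (Y 0) / \<epsilon>\<^sup>2 * inverse (real L)) \<longlonglongrightarrow> 0"
    by (rule tendsto_mult_right_zero[OF lim_inverse_n])
qed simp

lemma integral_truncation_tendsto_0:
  fixes Y :: "'a \<Rightarrow> real"
  assumes "integrable M Y" "\<And>\<omega>. \<omega> \<in> space M \<Longrightarrow> Y \<omega> \<ge> 0"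
  shows "(\<lambda>m. integral\<^sup>L M (\<lambda>\<omega>. Y \<omega> - min (Y \<omega>) (real m))) \<longlonglongrightarrow> 0"
proof -
  have "(\<lambda>m. integral\<^sup>L M (\<lambda>\<omega>. Y \<omega> - min (Y \<omega>) (real m))) \<longlonglongrightarrow> integral\<^sup>L M (\<lambda>\<omega>. 0)"
  proof (rule integral_dominated_convergence[where w=Y])
    show "AE \<omega> in M. (\<lambda>m. Y \<omega> - min (Y \<omega>) (real m)) \<longlonglongrightarrow> 0"
    proof (rule AE_I2, rule tendsto_eventually)
      fix \<omega>
      show "\<forall>\<^sub>F m in sequentially. Y \<omega> - min (Y \<omega>) (real m) = 0"
        using eventually_ge_at_top[of "nat \<lceil>Y \<omega>\<rceil>"]
        by (rule eventually_mono) (metis real_nat_ceiling_ge of_nat_le_iff order_trans min.absorb1 diff_self)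
    qed
    show "AE \<omega> in M. norm (Y \<omega> - min (Y \<omega>) (real m)) \<le> Y \<omega>" for m
      using assms(2) by (intro AE_I2) (auto simp: min_def)
  qed (use assms(1) in \<open>auto simp: borel_measurable_integrable\<close>)
  then show ?thesis by simp
qed
lemma (in prob_space) prob_mean_upper_tail_le_truncated:
  fixes Y :: "nat \<Rightarrow> 'a \<Rightarrow> real" and T :: real
  assumes meas[measurable]: "\<And>l. random_variable borel (Y l)"
    and ident: "\<And>l. distr M borel (Y l) = distr M borel (Y 0)"
    and nonneg: "\<And>l \<omega>. \<omega> \<in> space M \<Longrightarrow> Y l \<omega> \<ge> 0"
    and int: "integrable M (Y 0)"
    and eps: "\<epsilon> > 0" and L: "L > 0"
  defines "Z \<equiv> \<lambda>l \<omega>. min (Y l \<omega>) T"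
  shows "prob {\<omega>\<in>space M. (\<Sum>l<L. Y l \<omega>) / real L > expectation (Y 0) + \<epsilon>}
    \<le> prob {\<omega>\<in>space M. \<epsilon> / 2 \<le> \<bar>(\<Sum>l<L. Z l \<omega>) / real L - expectation (Z 0)\<bar>}
      + (expectation (Y 0) - expectation (Z 0)) / (\<epsilon> / 2)"
proof -
  have same_integral: "integral\<^sup>L M (\<lambda>\<omega>. f (Y l \<omega>)) = integral\<^sup>L M (\<lambda>\<omega>. f (Y 0 \<omega>))"
    and same_integrable: "integrable M (\<lambda>\<omega>. f (Y l \<omega>)) \<longleftrightarrow> integrable M (\<lambda>\<omega>. f (Y 0 \<omega>))"
    if "f \<in> borel_measurable borel" for f :: "real \<Rightarrow> real" and l
    using integral_comp_eq_of_distr_eq[OF ident meas meas that]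
      integrable_comp_iff_of_distr_eq[OF ident meas meas that] by auto
  have int_Y: "integrable M (Y l)" for l using same_integrable[of "\<lambda>x. x" l] int by simp
  have int_Z: "integrable M (Z l)" for l
    unfolding Z_def using int_Y[of l] by (intro integrable_min) auto
  have [measurable]: "Z l \<in> borel_measurable M" for l unfolding Z_def by measurable
  have int_diff: "integrable M (\<lambda>\<omega>. (\<Sum>l<L. Y l \<omega> - Z l \<omega>) / real L)"
    using int_Y int_Z by auto
  have nonneg_diff: "AE \<omega> in M. 0 \<le> (\<Sum>l<L. Y l \<omega> - Z l \<omega>) / real L"
    unfolding Z_def by (intro AE_I2 divide_nonneg_nonneg sum_nonneg) auto
  have mean_diff: "expectation (\<lambda>\<omega>. (\<Sum>l<L. Y l \<omega> - Z l \<omega>) / real L) = expectation (Y 0) - expectation (Z 0)"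
  proof -
    define c where "c = expectation (Y 0) - expectation (Z 0)"
    have "expectation (Y l) - expectation (Z l) = c" for l
      using same_integral[of "\<lambda>x. x" l] same_integral[of "\<lambda>x. min x T" l] unfolding c_def Z_def by simp
    then show ?thesis
      using int_Y int_Z L unfolding c_def[symmetric]
      by (simp add: Bochner_Integration.integral_sum Bochner_Integration.integral_diff)
  qed
  have markov: "prob {\<omega>\<in>space M. \<epsilon> / 2 \<le> (\<Sum>l<L. Y l \<omega> - Z l \<omega>) / real L}
      \<le> (expectation (Y 0) - expectation (Z 0)) / (\<epsilon> / 2)"
    using integral_Markov_inequality_measure[OF int_diff sets.top nonneg_diff, of "\<epsilon> / 2"] eps
    unfolding mean_diff by simp
  have "expectation (Z 0) \<le> expectation (Y 0)"
    using int_Z int by (intro integral_mono) (auto simp: Z_def)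
  then have "{\<omega>\<in>space M. (\<Sum>l<L. Y l \<omega>) / real L > expectation (Y 0) + \<epsilon>} \<subseteq>
      {\<omega>\<in>space M. \<epsilon> / 2 \<le> \<bar>(\<Sum>l<L. Z l \<omega>) / real L - expectation (Z 0)\<bar>}
      \<union> {\<omega>\<in>space M. \<epsilon> / 2 \<le> (\<Sum>l<L. Y l \<omega> - Z l \<omega>) / real L}"
  proof safe
    fix \<omega> assume "(\<Sum>l<L. Y l \<omega>) / real L > expectation (Y 0) + \<epsilon>"
      and "\<not> \<epsilon> / 2 \<le> (\<Sum>l<L. Y l \<omega> - Z l \<omega>) / real L"
    moreover have "(\<Sum>l<L. Y l \<omega> - Z l \<omega>) / real L = (\<Sum>l<L. Y l \<omega>) / real L - (\<Sum>l<L. Z l \<omega>) / real L"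
      by (simp add: sum_subtractf diff_divide_distrib)
    ultimately show "\<epsilon> / 2 \<le> \<bar>(\<Sum>l<L. Z l \<omega>) / real L - expectation (Z 0)\<bar>"
      using \<open>expectation (Z 0) \<le> expectation (Y 0)\<close> by linarith
  qed
  then have "prob {\<omega>\<in>space M. (\<Sum>l<L. Y l \<omega>) / real L > expectation (Y 0) + \<epsilon>}
      \<le> prob ({\<omega>\<in>space M. \<epsilon> / 2 \<le> \<bar>(\<Sum>l<L. Z l \<omega>) / real L - expectation (Z 0)\<bar>}
        \<union> {\<omega>\<in>space M. \<epsilon> / 2 \<le> (\<Sum>l<L. Y l \<omega> - Z l \<omega>) / real L})"
    by (intro finite_measure_mono) measurable
  also have "\<dots> \<le> prob {\<omega>\<in>space M. \<epsilon> / 2 \<le> \<bar>(\<Sum>l<L. Z l \<omega>) / real L - expectation (Z 0)\<bar>}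
      + prob {\<omega>\<in>space M. \<epsilon> / 2 \<le> (\<Sum>l<L. Y l \<omega> - Z l \<omega>) / real L}"
    by (rule measure_Un_le) measurable
  finally show ?thesis using markov by simp
qed

lemma (in prob_space) weak_law_upper_tail_nonneg:
  fixes Y :: "nat \<Rightarrow> 'a \<Rightarrow> real"
  assumes meas[measurable]: "\<And>l. random_variable borel (Y l)"
    and ident: "\<And>l. distr M borel (Y l) = distr M borel (Y 0)"
    and indep: "\<And>l k. l \<noteq> k \<Longrightarrow> indep_var borel (Y l) borel (Y k)"
    and nonneg: "\<And>l \<omega>. \<omega> \<in> space M \<Longrightarrow> Y l \<omega> \<ge> 0"
    and int: "integrable M (Y 0)"
    and eps: "\<epsilon> > 0"
  shows "(\<lambda>L. prob {\<omega>\<in>space M. (\<Sum>l<L. Y l \<omega>) / real L > expectation (Y 0) + \<epsilon>}) \<longlonglongrightarrow> 0"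
  unfolding tendsto_iff dist_real_def
proof (intro allI impI)
  fix \<eta> :: real assume \<eta>: "\<eta> > 0"
  define err where "err T = expectation (Y 0) - expectation (\<lambda>\<omega>. min (Y 0 \<omega>) T)" for T
  have "(\<lambda>m. err (real m)) \<longlonglongrightarrow> 0"
    using integral_truncation_tendsto_0[OF int nonneg] int
    by (simp add: err_def Bochner_Integration.integral_diff integrable_min)
  then have "\<forall>\<^sub>F m in sequentially. err (real m) < \<eta> * \<epsilon> / 4"
    using \<eta> eps by (intro order_tendstoD) auto
  then obtain m where m: "err (real m) < \<eta> * \<epsilon> / 4"
    by (meson eventually_sequentially order_refl)
  define Z where "Z l \<omega> = min (Y l \<omega>) (real m)" for l \<omega>
  have [measurable]: "Z l \<in> borel_measurable M" for l unfolding Z_def by measurable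
  have "(\<lambda>L. prob {\<omega>\<in>space M. \<epsilon> / 2 \<le> \<bar>(\<Sum>l<L. Z l \<omega>) / real L - expectation (Z 0)\<bar>}) \<longlonglongrightarrow> 0"
  proof (rule weak_law_of_large_numbers_L2)
    show "distr M borel (Z l) = distr M borel (Z 0)" for l
      unfolding Z_def by (rule distr_comp_eq_of_distr_eq[OF ident]) auto
    show "indep_var borel (Z l) borel (Z k)" if "l \<noteq> k" for l k
      using indep_var_compose[OF indep[OF that], of "\<lambda>x. min x (real m)" borel "\<lambda>x. min x (real m)" borel]
      unfolding Z_def comp_def by simp
    show "integrable M (\<lambda>\<omega>. (Z 0 \<omega>)\<^sup>2)"
      by (rule integrable_const_bound[where B="(real m)\<^sup>2"])
        (use nonneg in \<open>auto simp: Z_def min_def intro!: AE_I2 power_mono\<close>)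
  qed (use eps in auto)
  then have "\<forall>\<^sub>F L in sequentially.
      prob {\<omega>\<in>space M. \<epsilon> / 2 \<le> \<bar>(\<Sum>l<L. Z l \<omega>) / real L - expectation (Z 0)\<bar>} < \<eta> / 2"
    using \<eta> by (intro order_tendstoD) auto
  then show "\<forall>\<^sub>F L in sequentially. \<bar>prob {\<omega>\<in>space M. (\<Sum>l<L. Y l \<omega>) / real L > expectation (Y 0) + \<epsilon>} - 0\<bar> < \<eta>"
    using eventually_gt_at_top[of "0::nat"]
  proof eventually_elim
    case (elim L)
    have "err (real m) / (\<epsilon> / 2) \<le> \<eta> / 2"
      using m eps by (simp add: field_simps)
    moreover have "prob {\<omega>\<in>space M. (\<Sum>l<L. Y l \<omega>) / real L > expectation (Y 0) + \<epsilon>}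
      \<le> prob {\<omega>\<in>space M. \<epsilon> / 2 \<le> \<bar>(\<Sum>l<L. Z l \<omega>) / real L - expectation (Z 0)\<bar>}
        + err (real m) / (\<epsilon> / 2)"
      using prob_mean_upper_tail_le_truncated[where Y=Y and L=L and T="real m", OF meas ident nonneg int eps]
        elim(2)
      unfolding err_def Z_def by simp
    ultimately show ?case using elim(1) by simp
  qed
qed
section \<open>Limits in probability\<close>

lemma (in prob_space) tendsto_prob_mono:
  assumes "\<And>L. L > 0 \<Longrightarrow> A L \<subseteq> B L" "\<And>L. B L \<in> events" "(\<lambda>L. prob (B L)) \<longlonglongrightarrow> 0"
  shows "(\<lambda>L. prob (A L)) \<longlonglongrightarrow> 0"
proof (rule tendsto_sandwich[OF _ _ tendsto_const assms(3)])
  show "\<forall>\<^sub>F L in sequentially. prob (A L) \<le> prob (B L)"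
    using eventually_gt_at_top[of "0::nat"]
    by (rule eventually_mono) (intro finite_measure_mono assms)
qed simp

lemma (in prob_space) tendsto_prob_UN:
  assumes "finite I" "\<And>i L. i \<in> I \<Longrightarrow> B i L \<in> events"
    and "\<And>i. i \<in> I \<Longrightarrow> (\<lambda>L. prob (B i L)) \<longlonglongrightarrow> 0"
  shows "(\<lambda>L. prob (\<Union>i\<in>I. B i L)) \<longlonglongrightarrow> 0"
proof (rule tendsto_sandwich[OF _ _ tendsto_const])
  show "\<forall>\<^sub>F L in sequentially. prob (\<Union>i\<in>I. B i L) \<le> (\<Sum>i\<in>I. prob (B i L))"
    using assms(1,2) by (intro always_eventually allI measure_UNION_le) auto
  show "(\<lambda>L. \<Sum>i\<in>I. prob (B i L)) \<longlonglongrightarrow> 0"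
    using tendsto_sum[of I "\<lambda>i L. prob (B i L)" "\<lambda>_. 0" sequentially] assms(3) by simp
qed simp

lemma (in prob_space) tendsto_prob_Un:
  assumes "\<And>L. A L \<in> events" "\<And>L. B L \<in> events"
    and "(\<lambda>L. prob (A L)) \<longlonglongrightarrow> 0" "(\<lambda>L. prob (B L)) \<longlonglongrightarrow> 0"
  shows "(\<lambda>L. prob (A L \<union> B L)) \<longlonglongrightarrow> 0"
proof (rule tendsto_sandwich[OF _ _ tendsto_const])
  show "\<forall>\<^sub>F L in sequentially. prob (A L \<union> B L) \<le> prob (A L) + prob (B L)"
    using assms(1,2) by (intro always_eventually allI measure_Un_le) auto
  show "(\<lambda>L. prob (A L) + prob (B L)) \<longlonglongrightarrow> 0"
    using tendsto_add[OF assms(3,4)] by simp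
qed simp

lemma conv_in_prob_le:
  fixes X :: "nat \<Rightarrow> 'a \<Rightarrow> real" and F :: "real \<Rightarrow> real"
  assumes M: "prob_space M" and conv: "conv_in_prob M X c"
    and F: "(F \<longlongrightarrow> F0) (at_right 0)"
    and tail: "\<And>\<delta>. \<delta> > 0 \<Longrightarrow> (\<lambda>L. measure M {\<omega>\<in>space M. X L \<omega> > F \<delta>}) \<longlonglongrightarrow> 0"
  shows "c \<le> F0"
proof (rule ccontr)
  interpret prob_space M by (rule M)
  assume "\<not> c \<le> F0"
  define \<gamma> where "\<gamma> = (c - F0) / 2"
  have \<gamma>: "\<gamma> > 0" using \<open>\<not> c \<le> F0\<close> unfolding \<gamma>_def by simp
  have "\<forall>\<^sub>F \<delta> in at_right 0. F \<delta> < F0 + \<gamma>" using F \<gamma> by (intro order_tendstoD) auto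
  then obtain b where b: "b > 0" "\<And>y. y > 0 \<Longrightarrow> y < b \<Longrightarrow> F y < F0 + \<gamma>"
    unfolding eventually_at_right_field by auto
  define \<delta> where "\<delta> = b / 2"
  have \<delta>: "\<delta> > 0" "F \<delta> < F0 + \<gamma>" using b unfolding \<delta>_def by auto
  have [measurable]: "X L \<in> borel_measurable M" for L using conv unfolding conv_in_prob_def by auto
  have "(\<lambda>L. measure M {\<omega>\<in>space M. X L \<omega> > F \<delta>} + measure M {\<omega>\<in>space M. \<bar>X L \<omega> - c\<bar> > \<gamma>}) \<longlonglongrightarrow> 0 + 0"
    using tail[OF \<delta>(1)] conv \<gamma> unfolding conv_in_prob_def by (intro tendsto_add) auto
  then have "\<forall>\<^sub>F L in sequentially. measure M {\<omega>\<in>space M. X L \<omega> > F \<delta>} + measure M {\<omega>\<in>space M. \<bar>X L \<omega> - c\<bar> > \<gamma>} < 1"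
    by (intro order_tendstoD) auto
  then obtain L where L: "measure M {\<omega>\<in>space M. X L \<omega> > F \<delta>} + measure M {\<omega>\<in>space M. \<bar>X L \<omega> - c\<bar> > \<gamma>} < 1"
    by (meson eventually_sequentially order_refl)
  have "space M \<subseteq> {\<omega>\<in>space M. X L \<omega> > F \<delta>} \<union> {\<omega>\<in>space M. \<bar>X L \<omega> - c\<bar> > \<gamma>}"
    using \<delta>(2) \<open>\<not> c \<le> F0\<close> unfolding \<gamma>_def
    by (auto simp: abs_real_def field_simps split: if_splits)
  then have "measure M (space M) \<le> measure M ({\<omega>\<in>space M. X L \<omega> > F \<delta>} \<union> {\<omega>\<in>space M. \<bar>X L \<omega> - c\<bar> > \<gamma>})"
    by (intro finite_measure_mono) measurable
  also have "\<dots> \<le> measure M {\<omega>\<in>space M. X L \<omega> > F \<delta>} + measure M {\<omega>\<in>space M. \<bar>X L \<omega> - c\<bar> > \<gamma>}"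
    by (rule measure_Un_le) measurable
  finally show False using L prob_space by simp
qed

lemma conv_in_prob_uminus:
  assumes "conv_in_prob M X c"
  shows "conv_in_prob M (\<lambda>L \<omega>. - X L \<omega>) (- c)"
  using assms unfolding conv_in_prob_def by (simp add: abs_minus_commute)

lemma conv_in_prob_ge:
  fixes X :: "nat \<Rightarrow> 'a \<Rightarrow> real" and F :: "real \<Rightarrow> real"
  assumes M: "prob_space M" and conv: "conv_in_prob M X c"
    and F: "(F \<longlongrightarrow> F0) (at_right 0)"
    and tail: "\<And>\<delta>. \<delta> > 0 \<Longrightarrow> (\<lambda>L. measure M {\<omega>\<in>space M. X L \<omega> < F \<delta>}) \<longlonglongrightarrow> 0"
  shows "F0 \<le> c"
  using conv_in_prob_le[OF M conv_in_prob_uminus[OF conv] tendsto_minus[OF F]] tail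
  by simp
section \<open>Rician fading\<close>

lemma borel_measurable_cnj[measurable]: "cnj \<in> borel_measurable borel"
  by (intro borel_measurable_continuous_onI continuous_intros)

locale rician_channel = prob_space M for M :: "'a measure" +
  fixes hdiff :: "nat \<times> nat \<Rightarrow> 'a \<Rightarrow> complex" and K :: real
  assumes K: "K \<ge> 0"
    and hdiff_measurable[measurable]: "\<And>i. hdiff i \<in> borel_measurable M"
    and hdiff_indep: "indep_vars (\<lambda>_. borel) hdiff UNIV"
    and hdiff_distr: "\<And>i. distr M borel (hdiff i) = distr M borel (hdiff (0, 0))"
    and hdiff_mean: "integrable M (hdiff (0, 0))" "integral\<^sup>L M (hdiff (0, 0)) = 0"
    and hdiff_power2: "integrable M (\<lambda>\<omega>. (cmod (hdiff (0, 0) \<omega>))\<^sup>2)"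
                     "integral\<^sup>L M (\<lambda>\<omega>. (cmod (hdiff (0, 0) \<omega>))\<^sup>2) = 1"
begin

definition los :: real where "los = sqrt (K / (K + 1))"

definition gain :: "complex \<Rightarrow> complex" where
  "gain z = of_real los + z / of_real (sqrt (K + 1))"

definition h :: "nat \<times> nat \<Rightarrow> 'a \<Rightarrow> complex" where
  "h i \<omega> = gain (hdiff i \<omega>)"

lemma gain_measurable[measurable]: "gain \<in> borel_measurable borel"
  unfolding gain_def by measurable

lemma h_measurable[measurable]: "h i \<in> borel_measurable M"
  unfolding h_def by measurable

lemma los_power2: "los\<^sup>2 = K / (K + 1)"
  unfolding los_def using K by simp

lemma los_power2_le_1: "los\<^sup>2 \<le> 1"
  unfolding los_power2 using K by simp

lemma los_power2_mixture: "real N * los\<^sup>2 + (1 - los\<^sup>2) = (real N * K + 1) / (K + 1)"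
  unfolding los_power2 using K by (simp add: field_simps)

lemma hdiff_integral_eq:
  fixes f :: "complex \<Rightarrow> 'b::{banach, second_countable_topology}"
  assumes "f \<in> borel_measurable borel"
  shows "integral\<^sup>L M (\<lambda>\<omega>. f (hdiff i \<omega>)) = integral\<^sup>L M (\<lambda>\<omega>. f (hdiff (0, 0) \<omega>))"
  using integral_comp_eq_of_distr_eq[OF hdiff_distr _ _ assms] by simp

lemma hdiff_integrable_iff:
  fixes f :: "complex \<Rightarrow> 'b::{banach, second_countable_topology}"
  assumes "f \<in> borel_measurable borel"
  shows "integrable M (\<lambda>\<omega>. f (hdiff i \<omega>)) \<longleftrightarrow> integrable M (\<lambda>\<omega>. f (hdiff (0, 0) \<omega>))"
  using integrable_comp_iff_of_distr_eq[OF hdiff_distr _ _ assms] by simp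

lemma hdiff_integrable: "integrable M (hdiff i)"
  using hdiff_integrable_iff[of "\<lambda>z. z" i] hdiff_mean(1) by simp

lemma hdiff_power2_integrable: "integrable M (\<lambda>\<omega>. (cmod (hdiff i \<omega>))\<^sup>2)"
  using hdiff_integrable_iff[of "\<lambda>z. (cmod z)\<^sup>2" i] hdiff_power2(1) by simp

lemma h_integrable: "integrable M (h i)"
  unfolding h_def gain_def using hdiff_integrable[of i] by simp

lemma h_mean: "integral\<^sup>L M (h i) = of_real los"
  using hdiff_integral_eq[of "\<lambda>z. z" i] hdiff_integrable[of i] hdiff_mean(2) prob_space
  unfolding h_def gain_def by simp

lemma cmod_gain_power2:
  "(cmod (gain z))\<^sup>2 = los\<^sup>2 + 2 * los * Re z / sqrt (K + 1) + (cmod z)\<^sup>2 / (K + 1)"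
proof -
  have s: "sqrt (K + 1) > 0" using K by simp
  have "(cmod (gain z))\<^sup>2 = (los + Re z / sqrt (K + 1))\<^sup>2 + (Im z / sqrt (K + 1))\<^sup>2"
    unfolding gain_def cmod_power2 by (simp add: Re_divide_of_real Im_divide_of_real)
  also have "\<dots> = los\<^sup>2 + 2 * los * Re z / sqrt (K + 1) + ((Re z)\<^sup>2 + (Im z)\<^sup>2) / (sqrt (K + 1))\<^sup>2"
    by (simp add: power2_sum power_divide add_divide_distrib)
  also have "\<dots> = los\<^sup>2 + 2 * los * Re z / sqrt (K + 1) + (cmod z)\<^sup>2 / (K + 1)"
    using K by (simp add: cmod_power2)
  finally show ?thesis .
qed

lemma h_power2_integrable: "integrable M (\<lambda>\<omega>. (cmod (h i \<omega>))\<^sup>2)"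
  unfolding h_def cmod_gain_power2 using hdiff_integrable[of i] hdiff_power2_integrable[of i] by simp

lemma h_power2_mean: "integral\<^sup>L M (\<lambda>\<omega>. (cmod (h i \<omega>))\<^sup>2) = 1"
proof -
  have "integral\<^sup>L M (\<lambda>\<omega>. (cmod (hdiff i \<omega>))\<^sup>2) = 1"
    using hdiff_integral_eq[of "\<lambda>z. (cmod z)\<^sup>2" i] hdiff_power2(2) by simp
  moreover have "integral\<^sup>L M (hdiff i) = 0"
    using hdiff_integral_eq[of "\<lambda>z. z" i] hdiff_mean(2) by simp
  ultimately have "integral\<^sup>L M (\<lambda>\<omega>. (cmod (h i \<omega>))\<^sup>2) = los\<^sup>2 + 1 / (K + 1)"
    unfolding h_def cmod_gain_power2 using hdiff_integrable[of i] hdiff_power2_integrable[of i] prob_space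
    by (simp add: Bochner_Integration.integral_add)
  then show ?thesis using K unfolding los_power2 by (simp add: field_simps)
qed

lemma cmod_h_integrable: "integrable M (\<lambda>\<omega>. cmod (h i \<omega>))"
  using h_power2_integrable[of i] by (rule square_integrable_imp_integrable[rotated]) simp

lemma mean_cmod_h_pos: "integral\<^sup>L M (\<lambda>\<omega>. cmod (h (0, 0) \<omega>)) > 0"
proof (rule ccontr)
  assume "\<not> ?thesis"
  then have "integral\<^sup>L M (\<lambda>\<omega>. cmod (h (0, 0) \<omega>)) = 0"
    using integral_nonneg_AE[of "\<lambda>\<omega>. cmod (h (0, 0) \<omega>)" M] by (simp add: order.order_iff_strict)
  then have "AE \<omega> in M. (cmod (h (0, 0) \<omega>))\<^sup>2 = 0"
    using integral_nonneg_eq_0_iff_AE[OF cmod_h_integrable] by auto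
  then have "integral\<^sup>L M (\<lambda>\<omega>. (cmod (h (0, 0) \<omega>))\<^sup>2) = 0"
    by (simp add: integral_eq_zero_AE)
  then show False using h_power2_mean[of "(0, 0)"] by simp
qed

lemma hdiff_indep_pair:
  assumes "i \<noteq> j"
  shows "indep_var borel (hdiff i) borel (hdiff j)"
proof -
  have "indep_var (PiM {i} (\<lambda>_. borel)) (\<lambda>\<omega>. restrict (\<lambda>k. hdiff k \<omega>) {i})
                  (PiM {j} (\<lambda>_. borel)) (\<lambda>\<omega>. restrict (\<lambda>k. hdiff k \<omega>) {j})"
    by (rule indep_var_restrict[OF hdiff_indep]) (use assms in auto)
  from indep_var_compose[OF this, of "\<lambda>f. f i" borel "\<lambda>f. f j" borel]
  show ?thesis by (simp add: comp_def measurable_component_singleton)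
qed

lemma h_indep_pair:
  assumes "i \<noteq> j" and [measurable]: "f1 \<in> borel_measurable borel" "f2 \<in> borel_measurable borel"
  shows "indep_var borel (\<lambda>\<omega>. f1 (h i \<omega>)) borel (\<lambda>\<omega>. f2 (h j \<omega>))"
  using indep_var_compose[OF hdiff_indep_pair[OF assms(1)], of "\<lambda>z. f1 (gain z)" borel "\<lambda>z. f2 (gain z)" borel]
  unfolding h_def comp_def by simp

lemma pair_indep:
  fixes g :: "complex \<Rightarrow> complex \<Rightarrow> real"
  assumes [measurable]: "case_prod g \<in> borel_measurable (borel \<Otimes>\<^sub>M borel)" and "l \<noteq> k"
  shows "indep_var borel (\<lambda>\<omega>. g (h (n, l) \<omega>) (h (m, l) \<omega>)) borel (\<lambda>\<omega>. g (h (n, k) \<omega>) (h (m, k) \<omega>))"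
proof -
  have "indep_var (PiM {(n, l), (m, l)} (\<lambda>_. borel)) (\<lambda>\<omega>. restrict (\<lambda>i. hdiff i \<omega>) {(n, l), (m, l)})
                  (PiM {(n, k), (m, k)} (\<lambda>_. borel)) (\<lambda>\<omega>. restrict (\<lambda>i. hdiff i \<omega>) {(n, k), (m, k)})"
    by (rule indep_var_restrict[OF hdiff_indep]) (use assms(2) in auto)
  from indep_var_compose[OF this, of "\<lambda>f. g (gain (f (n, l))) (gain (f (m, l)))" borel
      "\<lambda>f. g (gain (f (n, k))) (gain (f (m, k)))" borel]
  show ?thesis unfolding h_def by (simp add: comp_def)
qed

lemma pair_distr:
  fixes g :: "complex \<Rightarrow> complex \<Rightarrow> real"
  assumes [measurable]: "case_prod g \<in> borel_measurable (borel \<Otimes>\<^sub>M borel)"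
  shows "distr M borel (\<lambda>\<omega>. g (h (n, l) \<omega>) (h (m, l) \<omega>)) = distr M borel (\<lambda>\<omega>. g (h (n, 0) \<omega>) (h (m, 0) \<omega>))"
proof -
  have joint: "distr M (borel \<Otimes>\<^sub>M borel) (\<lambda>\<omega>. (hdiff (n, l) \<omega>, hdiff (m, l) \<omega>)) =
              distr M (borel \<Otimes>\<^sub>M borel) (\<lambda>\<omega>. (hdiff (n, 0) \<omega>, hdiff (m, 0) \<omega>))" (is "?L = ?R")
  proof (cases "n = m")
    case True
    have "?L = distr (distr M borel (hdiff (n, l))) (borel \<Otimes>\<^sub>M borel) (\<lambda>z. (z, z))"
      using True by (subst distr_distr) (auto simp: comp_def)
    also have "\<dots> = distr (distr M borel (hdiff (0, 0))) (borel \<Otimes>\<^sub>M borel) (\<lambda>z. (z, z))"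
      by (simp only: hdiff_distr[of "(n, l)"])
    also have "\<dots> = distr (distr M borel (hdiff (n, 0))) (borel \<Otimes>\<^sub>M borel) (\<lambda>z. (z, z))"
      by (simp only: hdiff_distr[of "(n, 0)"])
    also have "\<dots> = ?R"
      using True by (subst distr_distr) (auto simp: comp_def)
    finally show ?thesis .
  next
    case False
    have "?L = distr M borel (hdiff (n, l)) \<Otimes>\<^sub>M distr M borel (hdiff (m, l))"
      using indep_var_distribution_eq[THEN iffD1, OF hdiff_indep_pair[of "(n, l)" "(m, l)"]] False by simp
    also have "\<dots> = distr M borel (hdiff (0, 0)) \<Otimes>\<^sub>M distr M borel (hdiff (0, 0))"
      by (simp only: hdiff_distr[of "(n, l)"] hdiff_distr[of "(m, l)"])
    also have "\<dots> = distr M borel (hdiff (n, 0)) \<Otimes>\<^sub>M distr M borel (hdiff (m, 0))"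
      by (simp only: hdiff_distr[of "(n, 0)"] hdiff_distr[of "(m, 0)"])
    also have "\<dots> = ?R"
      using indep_var_distribution_eq[THEN iffD1, OF hdiff_indep_pair[of "(n, 0)" "(m, 0)"]] False by simp
    finally show ?thesis .
  qed
  have "distr M borel (\<lambda>\<omega>. g (h (n, l) \<omega>) (h (m, l) \<omega>)) =
        distr ?L borel (\<lambda>p. g (gain (fst p)) (gain (snd p)))"
    unfolding h_def by (subst distr_distr) (auto simp: comp_def)
  also have "\<dots> = distr ?R borel (\<lambda>p. g (gain (fst p)) (gain (snd p)))" by (simp only: joint)
  also have "\<dots> = distr M borel (\<lambda>\<omega>. g (h (n, 0) \<omega>) (h (m, 0) \<omega>))"
    unfolding h_def by (subst distr_distr) (auto simp: comp_def)
  finally show ?thesis .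
qed

lemma pair_average_tail_L2:
  fixes g :: "complex \<Rightarrow> complex \<Rightarrow> real"
  assumes [measurable]: "case_prod g \<in> borel_measurable (borel \<Otimes>\<^sub>M borel)"
    and "integrable M (\<lambda>\<omega>. (g (h (n, 0) \<omega>) (h (m, 0) \<omega>))\<^sup>2)" and "\<epsilon> > 0"
  shows "(\<lambda>L. prob {\<omega>\<in>space M. \<epsilon> \<le> \<bar>(\<Sum>l<L. g (h (n, l) \<omega>) (h (m, l) \<omega>)) / real L
      - expectation (\<lambda>\<omega>. g (h (n, 0) \<omega>) (h (m, 0) \<omega>))\<bar>}) \<longlonglongrightarrow> 0"
proof (rule weak_law_of_large_numbers_L2)
  show "distr M borel (\<lambda>\<omega>. g (h (n, l) \<omega>) (h (m, l) \<omega>)) = distr M borel (\<lambda>\<omega>. g (h (n, 0) \<omega>) (h (m, 0) \<omega>))" for l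
    by (rule pair_distr) fact
  show "indep_var borel (\<lambda>\<omega>. g (h (n, l) \<omega>) (h (m, l) \<omega>)) borel (\<lambda>\<omega>. g (h (n, k) \<omega>) (h (m, k) \<omega>))"
    if "l \<noteq> k" for l k
    by (rule pair_indep) fact+
qed (use assms in auto)

lemma pair_average_upper_tail:
  fixes g :: "complex \<Rightarrow> complex \<Rightarrow> real"
  assumes [measurable]: "case_prod g \<in> borel_measurable (borel \<Otimes>\<^sub>M borel)"
    and "\<And>x y. g x y \<ge> 0" and "integrable M (\<lambda>\<omega>. g (h (n, 0) \<omega>) (h (m, 0) \<omega>))" and "\<epsilon> > 0"
  shows "(\<lambda>L. prob {\<omega>\<in>space M. (\<Sum>l<L. g (h (n, l) \<omega>) (h (m, l) \<omega>)) / real L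
      > expectation (\<lambda>\<omega>. g (h (n, 0) \<omega>) (h (m, 0) \<omega>)) + \<epsilon>}) \<longlonglongrightarrow> 0"
proof (rule weak_law_upper_tail_nonneg)
  show "distr M borel (\<lambda>\<omega>. g (h (n, l) \<omega>) (h (m, l) \<omega>)) = distr M borel (\<lambda>\<omega>. g (h (n, 0) \<omega>) (h (m, 0) \<omega>))" for l
    by (rule pair_distr) fact
  show "indep_var borel (\<lambda>\<omega>. g (h (n, l) \<omega>) (h (m, l) \<omega>)) borel (\<lambda>\<omega>. g (h (n, k) \<omega>) (h (m, k) \<omega>))"
    if "l \<noteq> k" for l k
    by (rule pair_indep) fact+
qed (use assms in auto)

lemma mean_power2_tail:
  assumes "\<epsilon> > 0"
  shows "(\<lambda>L. prob {\<omega>\<in>space M. (\<Sum>l<L. (cmod (h (n, l) \<omega>))\<^sup>2) / real L > 1 + \<epsilon>}) \<longlonglongrightarrow> 0"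
  using pair_average_upper_tail[of "\<lambda>x y. (cmod x)\<^sup>2" n n] h_power2_integrable h_power2_mean assms
  by simp

lemma mean_cmod_deviation_tail:
  assumes "\<epsilon> > 0"
  shows "(\<lambda>L. prob {\<omega>\<in>space M. \<epsilon> \<le> \<bar>(\<Sum>l<L. cmod (h (n, l) \<omega>)) / real L
    - integral\<^sup>L M (\<lambda>\<omega>. cmod (h (0, 0) \<omega>))\<bar>}) \<longlonglongrightarrow> 0"
proof -
  have "integral\<^sup>L M (\<lambda>\<omega>. cmod (h (n, 0) \<omega>)) = integral\<^sup>L M (\<lambda>\<omega>. cmod (h (0, 0) \<omega>))"
    using hdiff_integral_eq[of "\<lambda>z. cmod (gain z)" "(n, 0)"] unfolding h_def by simp
  then show ?thesis
    using pair_average_tail_L2[of "\<lambda>x y. cmod x" n n] h_power2_integrable assms by simp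
qed

lemma cross_mean_tail:
  assumes "n \<noteq> m" "cmod c \<le> 1" "\<epsilon> > 0"
  shows "(\<lambda>L. prob {\<omega>\<in>space M. \<epsilon> \<le> \<bar>(\<Sum>l<L. Re (c * (cnj (h (n, l) \<omega>) * h (m, l) \<omega>))) / real L
    - Re (c * of_real (los\<^sup>2))\<bar>}) \<longlonglongrightarrow> 0"
proof -
  have int_h: "integrable M (\<lambda>\<omega>. cnj (h (n, 0) \<omega>))" "integrable M (\<lambda>\<omega>. h (m, 0) \<omega>)"
    using h_integrable by auto
  have indep_prod: "indep_var borel (\<lambda>\<omega>. cnj (h (n, 0) \<omega>)) borel (\<lambda>\<omega>. h (m, 0) \<omega>)"
    using assms(1) by (intro h_indep_pair) auto
  have int_prod: "integrable M (\<lambda>\<omega>. cnj (h (n, 0) \<omega>) * h (m, 0) \<omega>)"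
    by (rule indep_var_integrable[OF indep_prod int_h])
  have "integral\<^sup>L M (\<lambda>\<omega>. cnj (h (n, 0) \<omega>) * h (m, 0) \<omega>) = of_real (los\<^sup>2)"
    unfolding indep_var_lebesgue_integral[OF indep_prod int_h]
    using h_mean[of "(n, 0)"] h_mean[of "(m, 0)"] by (simp add: power2_eq_square)
  then have mean: "expectation (\<lambda>\<omega>. Re (c * (cnj (h (n, 0) \<omega>) * h (m, 0) \<omega>))) = Re (c * of_real (los\<^sup>2))"
    using integral_bounded_linear[OF bounded_linear_Re, of M "\<lambda>\<omega>. c * (cnj (h (n, 0) \<omega>) * h (m, 0) \<omega>)"]
      integrable_mult_right[OF int_prod, of c]
      integral_mult_right_zero[of M c "\<lambda>\<omega>. cnj (h (n, 0) \<omega>) * h (m, 0) \<omega>"]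
    by (simp only:)
  have "indep_var borel (\<lambda>\<omega>. (cmod (h (n, 0) \<omega>))\<^sup>2) borel (\<lambda>\<omega>. (cmod (h (m, 0) \<omega>))\<^sup>2)"
    using assms(1) by (intro h_indep_pair) auto
  then have int_bound: "integrable M (\<lambda>\<omega>. (cmod (h (n, 0) \<omega>))\<^sup>2 * (cmod (h (m, 0) \<omega>))\<^sup>2)"
    by (rule indep_var_integrable[OF _ h_power2_integrable h_power2_integrable])
  have "integrable M (\<lambda>\<omega>. (Re (c * (cnj (h (n, 0) \<omega>) * h (m, 0) \<omega>)))\<^sup>2)"
  proof (rule Bochner_Integration.integrable_bound[OF int_bound])
    show "AE \<omega> in M. norm ((Re (c * (cnj (h (n, 0) \<omega>) * h (m, 0) \<omega>)))\<^sup>2)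
        \<le> norm ((cmod (h (n, 0) \<omega>))\<^sup>2 * (cmod (h (m, 0) \<omega>))\<^sup>2)"
    proof (rule AE_I2)
      fix \<omega>
      have "\<bar>Re (c * (cnj (h (n, 0) \<omega>) * h (m, 0) \<omega>))\<bar> \<le> cmod (h (n, 0) \<omega>) * cmod (h (m, 0) \<omega>)"
        using abs_Re_le_cmod[of "c * (cnj (h (n, 0) \<omega>) * h (m, 0) \<omega>)"]
          mult_right_mono[OF assms(2), of "cmod (h (n, 0) \<omega>) * cmod (h (m, 0) \<omega>)"]
        by (simp add: norm_mult)
      then show "norm ((Re (c * (cnj (h (n, 0) \<omega>) * h (m, 0) \<omega>)))\<^sup>2)
          \<le> norm ((cmod (h (n, 0) \<omega>))\<^sup>2 * (cmod (h (m, 0) \<omega>))\<^sup>2)"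
        by (metis abs_ge_zero norm_power power2_abs power_mono power_mult_distrib real_norm_def)
    qed
  qed measurable
  moreover have "case_prod (\<lambda>x y. Re (c * (cnj x * y))) \<in> borel_measurable (borel \<Otimes>\<^sub>M borel)"
    by measurable
  ultimately show ?thesis
    using pair_average_tail_L2[of "\<lambda>x y. Re (c * (cnj x * y))" n m, OF _ _ assms(3)] unfolding mean
    by blast
qed

lemma gram_entry_tail:
  assumes \<delta>: "\<delta> > 0"
  shows "(\<lambda>L. prob {\<omega>\<in>space M. cmod (\<Sum>l<L. cnj (h (n, l) \<omega>) * h (m, l) \<omega>) / real L
    > los\<^sup>2 + \<delta> + (if n = m then 1 - los\<^sup>2 else 0)}) \<longlonglongrightarrow> 0"
proof (cases "n = m")
  case True
  have "cmod (\<Sum>l<L. cnj (h (n, l) \<omega>) * h (n, l) \<omega>) = (\<Sum>l<L. (cmod (h (n, l) \<omega>))\<^sup>2)" for L \<omega>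
  proof -
    have "(\<Sum>l<L. cnj (h (n, l) \<omega>) * h (n, l) \<omega>) = of_real (\<Sum>l<L. (cmod (h (n, l) \<omega>))\<^sup>2)"
      unfolding of_real_sum complex_norm_square by (simp add: mult.commute)
    then have "cmod (\<Sum>l<L. cnj (h (n, l) \<omega>) * h (n, l) \<omega>) = cmod (of_real (\<Sum>l<L. (cmod (h (n, l) \<omega>))\<^sup>2) :: complex)"
      by (simp only:)
    then show ?thesis by (simp only: norm_of_real) (simp add: sum_nonneg)
  qed
  then show ?thesis using mean_power2_tail[OF \<delta>, of n] True by (simp add: add.commute)
next
  case False
  define S where "S L \<omega> = (\<Sum>l<L. cnj (h (n, l) \<omega>) * h (m, l) \<omega>)" for L \<omega>
  define A where "A L = {\<omega>\<in>space M. \<delta> / 2 \<le> \<bar>Re (S L \<omega>) / real L - los\<^sup>2\<bar>}" for L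
  define B where "B L = {\<omega>\<in>space M. \<delta> / 2 \<le> \<bar>Im (S L \<omega>) / real L\<bar>}" for L
  have [measurable]: "A L \<in> events" "B L \<in> events" for L unfolding A_def B_def S_def by measurable
  have Re_S: "Re (S L \<omega>) = (\<Sum>l<L. Re (1 * (cnj (h (n, l) \<omega>) * h (m, l) \<omega>)))"
    and Im_S: "Im (S L \<omega>) = (\<Sum>l<L. Re (- \<i> * (cnj (h (n, l) \<omega>) * h (m, l) \<omega>)))" for L \<omega>
    unfolding S_def by (simp_all only: Re_sum Im_sum mult_1_left mult_minus_left uminus_complex.sel
        Re_i_times minus_minus)
  have "(\<lambda>L. prob (A L)) \<longlonglongrightarrow> 0"
    using cross_mean_tail[OF False, of 1 "\<delta> / 2"] \<delta> unfolding A_def Re_S by simp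
  moreover have "(\<lambda>L. prob (B L)) \<longlonglongrightarrow> 0"
    using cross_mean_tail[OF False, of "- \<i>" "\<delta> / 2"] \<delta> unfolding B_def Im_S by simp
  ultimately have tail: "(\<lambda>L. prob (A L \<union> B L)) \<longlonglongrightarrow> 0"
    by (intro tendsto_prob_Un) auto
  have incl: "{\<omega>\<in>space M. cmod (S L \<omega>) / real L > los\<^sup>2 + \<delta>} \<subseteq> A L \<union> B L" for L
  proof safe
    fix \<omega> assume \<omega>: "\<omega> \<in> space M" "cmod (S L \<omega>) / real L > los\<^sup>2 + \<delta>" "\<omega> \<notin> B L"
    have "cmod (S L \<omega>) / real L \<le> \<bar>Re (S L \<omega>) / real L\<bar> + \<bar>Im (S L \<omega>) / real L\<bar>"
      using divide_right_mono[OF cmod_le[of "S L \<omega>"], of "real L"] by (simp add: abs_divide add_divide_distrib)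
    moreover have "\<not> \<delta> / 2 \<le> \<bar>Im (S L \<omega>) / real L\<bar>"
      using \<omega>(1,3) unfolding B_def by blast
    ultimately have "\<delta> / 2 \<le> \<bar>Re (S L \<omega>) / real L - los\<^sup>2\<bar>"
      using \<omega>(2) zero_le_power2[of los] by linarith
    then show "\<omega> \<in> A L" unfolding A_def using \<omega>(1) by blast
  qed
  have "los\<^sup>2 + \<delta> + (if n = m then 1 - los\<^sup>2 else 0) = los\<^sup>2 + \<delta>"
    using False by simp
  then show ?thesis
    unfolding S_def[symmetric]
    by (rule ssubst) (rule tendsto_prob_mono[OF incl _ tail], auto)
qed

section \<open>Bounds on the error exponents\<close>

definition Lambda :: "real \<Rightarrow> real \<Rightarrow> real \<Rightarrow> real \<Rightarrow> nat \<Rightarrow> nat \<Rightarrow> 'a \<Rightarrow> real" where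
  "Lambda th se sn P n L \<omega> = th\<^sup>2 / 8 * (1 / real L) * csis_opt_value n L se sn P (\<lambda>a b. h (a, b) \<omega>)"

lemma Lambda_limit_nonneg:
  assumes se: "se > 0" and sn: "sn > 0" and P: "P \<ge> 0"
    and conv: "conv_in_prob M (Lambda th se sn P n) E"
  shows "E \<ge> 0"
proof (rule conv_in_prob_ge[OF prob_space_axioms conv tendsto_const])
  have empty: "{\<omega> \<in> space M. Lambda th se sn P n L \<omega> < 0} = {}" for L
    using csis_opt_value_nonneg[OF se sn _ P] by (cases "L = 0") (auto simp: Lambda_def not_less)
  show "(\<lambda>L. prob {\<omega> \<in> space M. Lambda th se sn P n L \<omega> < 0}) \<longlonglongrightarrow> 0" for \<delta> :: real
    unfolding empty by simp
qed

text \<open>Outside the event that some Gram entry exceeds its limit by \<open>\<delta>\<close>,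
  \<open>csis_opt_value_le_gram\<close> applies with \<open>b = los\<^sup>2 + \<delta>\<close> and \<open>e = 1 - los\<^sup>2\<close>.\<close>

lemma Lambda_limit_le:
  assumes se: "se > 0" and sn: "sn > 0" and P: "P \<ge> 0"
    and conv: "conv_in_prob M (Lambda th se sn P N) E"
  defines "c \<equiv> real N * los\<^sup>2 + (1 - los\<^sup>2)"
  shows "E \<le> th\<^sup>2 / 8 * min (P * c / (se * (P * c) + sn)) (P * c / sn)"
proof -
  define c' where "c' \<delta> = real N * (los\<^sup>2 + \<delta>) + (1 - los\<^sup>2)" for \<delta>
  define F where "F \<delta> = th\<^sup>2 / 8 * min (P * c' \<delta> / (se * (P * c' \<delta>) + sn)) (P * c' \<delta> / sn)" for \<delta>
  have "se * (P * c' 0) + sn \<noteq> 0"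
    using se sn P los_power2_le_1 unfolding c'_def
    by (smt (verit) mult_nonneg_nonneg of_nat_0_le_iff zero_le_power2)
  then have "(F \<longlongrightarrow> F 0) (at_right 0)"
    unfolding F_def c'_def using sn by (intro tendsto_intros) auto
  moreover have "F 0 = th\<^sup>2 / 8 * min (P * c / (se * (P * c) + sn)) (P * c / sn)"
    unfolding F_def c'_def c_def by simp
  ultimately have lim: "(F \<longlongrightarrow> th\<^sup>2 / 8 * min (P * c / (se * (P * c) + sn)) (P * c / sn)) (at_right 0)"
    by simp
  show ?thesis
  proof (rule conv_in_prob_le[OF prob_space_axioms conv lim])
    fix \<delta> :: real assume \<delta>: "\<delta> > 0"
    define G where "G L = (\<Union>p\<in>{..<N} \<times> {..<N}. {\<omega>\<in>space M.
      cmod (\<Sum>l<L. cnj (h (fst p, l) \<omega>) * h (snd p, l) \<omega>) / real L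
        > los\<^sup>2 + \<delta> + (if fst p = snd p then 1 - los\<^sup>2 else 0)})" for L
    have incl: "{\<omega> \<in> space M. F \<delta> < Lambda th se sn P N L \<omega>} \<subseteq> G L" if L: "L > 0" for L
    proof
      fix \<omega> assume \<omega>: "\<omega> \<in> {\<omega> \<in> space M. F \<delta> < Lambda th se sn P N L \<omega>}"
      show "\<omega> \<in> G L"
      proof (rule ccontr)
        assume "\<omega> \<notin> G L"
        then have "cmod (\<Sum>l<L. cnj (h (n, l) \<omega>) * h (m, l) \<omega>)
            \<le> real L * (los\<^sup>2 + \<delta> + (if n = m then 1 - los\<^sup>2 else 0))" if "n < N" "m < N" for n m
          using \<omega> that L unfolding G_def by (auto simp: not_less divide_le_eq mult.commute)
        then have "csis_opt_value N L se sn P (\<lambda>a b. h (a, b) \<omega>) / real L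
            \<le> min (P * c' \<delta> / (se * (P * c' \<delta>) + sn)) (P * c' \<delta> / sn)"
          unfolding c'_def using \<delta> los_power2_le_1
          by (intro csis_opt_value_le_gram[OF se sn L P]) auto
        then have "th\<^sup>2 / 8 * (csis_opt_value N L se sn P (\<lambda>a b. h (a, b) \<omega>) / real L) \<le> F \<delta>"
          unfolding F_def by (rule mult_left_mono) simp
        then have "Lambda th se sn P N L \<omega> \<le> F \<delta>"
          unfolding Lambda_def by simp
        with \<omega> show False by simp
      qed
    qed
    have tail: "(\<lambda>L. prob (G L)) \<longlonglongrightarrow> 0"
      unfolding G_def using \<delta> by (intro tendsto_prob_UN gram_entry_tail) auto
    show "(\<lambda>L. prob {\<omega> \<in> space M. F \<delta> < Lambda th se sn P N L \<omega>}) \<longlonglongrightarrow> 0"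
      by (rule tendsto_prob_mono[OF incl _ tail]) (auto simp: G_def)
  qed
qed

lemma Lambda_single_antenna_limit_ge:
  assumes se: "se > 0" and sn: "sn > 0" and P: "P \<ge> 0"
    and conv: "conv_in_prob M (Lambda th se sn P 1) E"
  defines "\<mu> \<equiv> integral\<^sup>L M (\<lambda>\<omega>. cmod (h (0, 0) \<omega>))"
  shows "th\<^sup>2 / 8 * (P * \<mu>\<^sup>2 / (se * P + sn)) \<le> E"
proof -
  have \<mu>: "\<mu> > 0" unfolding \<mu>_def by (rule mean_cmod_h_pos)
  define F where "F \<delta> = th\<^sup>2 / 8 * (P * (max 0 (\<mu> - \<delta>))\<^sup>2 / (se * P * (1 + \<delta>) + sn))" for \<delta>
  have "se * P * (1 + 0) + sn \<noteq> 0"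
    using se sn P by (smt (verit) mult_nonneg_nonneg)
  then have "(F \<longlongrightarrow> F 0) (at_right 0)"
    unfolding F_def by (intro tendsto_intros) auto
  moreover have "F 0 = th\<^sup>2 / 8 * (P * \<mu>\<^sup>2 / (se * P + sn))"
    unfolding F_def using \<mu> by simp
  ultimately have lim: "(F \<longlongrightarrow> th\<^sup>2 / 8 * (P * \<mu>\<^sup>2 / (se * P + sn))) (at_right 0)"
    by simp
  show ?thesis
  proof (rule conv_in_prob_ge[OF prob_space_axioms conv lim])
    fix \<delta> :: real assume \<delta>: "\<delta> > 0"
    define A where "A L = {\<omega>\<in>space M. \<delta> \<le> \<bar>(\<Sum>l<L. cmod (h (0, l) \<omega>)) / real L - \<mu>\<bar>}" for L
    define B where "B L = {\<omega>\<in>space M. (\<Sum>l<L. (cmod (h (0, l) \<omega>))\<^sup>2) / real L > 1 + \<delta>}" for L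
    have [measurable]: "A L \<in> events" "B L \<in> events" for L unfolding A_def B_def by measurable
    have incl: "{\<omega> \<in> space M. Lambda th se sn P 1 L \<omega> < F \<delta>} \<subseteq> A L \<union> B L" if L: "L > 0" for L
    proof
      fix \<omega> assume \<omega>: "\<omega> \<in> {\<omega> \<in> space M. Lambda th se sn P 1 L \<omega> < F \<delta>}"
      show "\<omega> \<in> A L \<union> B L"
      proof (rule ccontr)
        assume "\<omega> \<notin> A L \<union> B L"
        define a where "a = (\<Sum>l<L. cmod (h (0, l) \<omega>)) / real L"
        define b where "b = (\<Sum>l<L. (cmod (h (0, l) \<omega>))\<^sup>2) / real L"
        have a: "max 0 (\<mu> - \<delta>) \<le> a" and b: "b \<le> 1 + \<delta>" "b \<ge> 0"
          using \<omega> \<open>\<omega> \<notin> A L \<union> B L\<close> unfolding a_def b_def A_def B_def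
          by (auto simp: abs_less_iff sum_nonneg)
        have "P * (max 0 (\<mu> - \<delta>))\<^sup>2 / (se * P * (1 + \<delta>) + sn) \<le> P * a\<^sup>2 / (se * P * b + sn)"
        proof (rule frac_le)
          show "P * (max 0 (\<mu> - \<delta>))\<^sup>2 \<le> P * a\<^sup>2"
            using a P by (intro mult_left_mono power_mono) auto
          show "0 < se * P * b + sn" "se * P * b + sn \<le> se * P * (1 + \<delta>) + sn"
            using se sn P b by (auto intro!: add_nonneg_pos mult_left_mono)
        qed (use P in simp)
        also have "\<dots> \<le> csis_opt_value 1 L se sn P (\<lambda>a b. h (a, b) \<omega>) / real L"
          using csis_opt_value_single_antenna_ge[OF se sn L P, of "\<lambda>a b. h (a, b) \<omega>"]
          unfolding a_def b_def by (simp add: mult.assoc)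
        finally have "F \<delta> \<le> th\<^sup>2 / 8 * (csis_opt_value 1 L se sn P (\<lambda>a b. h (a, b) \<omega>) / real L)"
          unfolding F_def by (rule mult_left_mono) simp
        then have "F \<delta> \<le> Lambda th se sn P 1 L \<omega>"
          unfolding Lambda_def by simp
        with \<omega> show False by simp
      qed
    qed
    have tail: "(\<lambda>L. prob (A L \<union> B L)) \<longlonglongrightarrow> 0"
      using mean_cmod_deviation_tail[OF \<delta>, of 0] mean_power2_tail[OF \<delta>, of 0]
      unfolding A_def B_def \<mu>_def by (intro tendsto_prob_Un) auto
    show "(\<lambda>L. prob {\<omega> \<in> space M. Lambda th se sn P 1 L \<omega> < F \<delta>}) \<longlonglongrightarrow> 0"
      by (rule tendsto_prob_mono[OF incl _ tail]) auto
  qed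
qed

end
lemma exponent_ratio_le:
  fixes th se sn P c E :: real and N :: nat
  assumes th: "th \<noteq> 0" and se: "se > 0" and sn: "sn > 0" and P: "P > 0"
    and c: "0 \<le> c" "c \<le> real N"
    and E: "E \<le> th\<^sup>2 / 8 * min (P * c / (se * (P * c) + sn)) (P * c / sn)"
  defines "z \<equiv> se * P / sn"
  shows "E / (th\<^sup>2 / 8 * (P / (se * P + sn))) \<le> min (real N * (z + 1) / (real N * z + 1)) ((z + 1) * c)"
proof -
  define A where "A = P / (se * P + sn)"
  have A: "A > 0" unfolding A_def using se sn P by (intro divide_pos_pos add_pos_pos mult_pos_pos)
  have z: "z \<ge> 0" unfolding z_def using se sn P by simp
  have "se * P + sn > 0" using se sn P by (simp add: add_pos_pos)
  moreover have "z + 1 = (se * P + sn) / sn"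
    unfolding z_def using sn by (simp add: field_simps)
  ultimately have A_z: "A * (z + 1) = P / sn"
    unfolding A_def by simp
  have "P * c / (se * (P * c) + sn) = (P / sn) * (c / (z * c + 1))"
    unfolding z_def using sn by (simp add: field_simps)
  also have "\<dots> \<le> (P / sn) * (real N / (z * real N + 1))"
    using frac_mono_pos[OF c z, of 1] P sn by (intro mult_left_mono) auto
  also have "\<dots> = A * (real N * (z + 1) / (real N * z + 1))"
    unfolding A_z[symmetric] by (simp add: field_simps)
  finally have bound1: "P * c / (se * (P * c) + sn) \<le> A * (real N * (z + 1) / (real N * z + 1))" .
  have bound2: "P * c / sn = A * ((z + 1) * c)"
    unfolding mult.assoc[symmetric] A_z by simp
  have "min (P * c / (se * (P * c) + sn)) (P * c / sn)
      \<le> min (A * (real N * (z + 1) / (real N * z + 1))) (A * ((z + 1) * c))"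
    using bound1 bound2 by (intro min.mono) auto
  also have "\<dots> = A * min (real N * (z + 1) / (real N * z + 1)) ((z + 1) * c)"
    using A by (simp add: min_mult_distrib_left)
  finally have "E \<le> th\<^sup>2 / 8 * (A * min (real N * (z + 1) / (real N * z + 1)) ((z + 1) * c))"
    by (rule order_trans[OF E mult_left_mono]) simp
  then have "E \<le> min (real N * (z + 1) / (real N * z + 1)) ((z + 1) * c) * (th\<^sup>2 / 8 * A)"
    by (simp only: ac_simps)
  moreover have "th\<^sup>2 / 8 * A > 0" using A th by simp
  ultimately show ?thesis
    unfolding A_def[symmetric] by (simp only: pos_divide_le_eq)
qed

lemma awgn_exponent_eq:
  fixes th p1 se sn PT :: real
  assumes den: "p1 * th\<^sup>2 + se > 0" and se: "se > 0" and sn: "sn > 0" and PT: "PT > 0"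
  defines "P \<equiv> PT / (p1 * th\<^sup>2 + se)"
  shows "1 / 8 * ((PT / sn) * (th\<^sup>2 / se) / ((PT / sn) + p1 * (th\<^sup>2 / se) + 1))
      = th\<^sup>2 / 8 * (P / (se * P + sn))"
    and "(PT / sn) / (p1 * (th\<^sup>2 / se) + 1) = se * P / sn"
proof -
  define D where "D = p1 * th\<^sup>2 + se"
  have D: "D > 0" using den unfolding D_def .
  have pos: "se * PT + sn * D > 0" using se sn PT D by (intro add_pos_pos mult_pos_pos)
  have "(PT / sn) + p1 * (th\<^sup>2 / se) + 1 = (se * PT + sn * D) / (sn * se)"
    unfolding D_def using se sn by (simp add: field_simps)
  moreover have "se * (PT / D) + sn = (se * PT + sn * D) / D"
    using D by (simp add: field_simps)
  ultimately show "1 / 8 * ((PT / sn) * (th\<^sup>2 / se) / ((PT / sn) + p1 * (th\<^sup>2 / se) + 1))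
      = th\<^sup>2 / 8 * (P / (se * P + sn))"
    unfolding P_def D_def[symmetric] using se sn D pos by (simp add: field_simps)
  have "p1 * (th\<^sup>2 / se) + 1 = D / se" unfolding D_def using se by (simp add: field_simps)
  then show "(PT / sn) / (p1 * (th\<^sup>2 / se) + 1) = se * P / sn"
    unfolding P_def D_def[symmetric] using se sn D by (simp add: field_simps)
qed
theorem theorem2:
  fixes M :: "'a measure"
    and hdiff :: "nat \<times> nat \<Rightarrow> 'a \<Rightarrow> complex"
    and \<theta> p1 s_eta s_nu P_T K :: real
    and N :: nat
    and E_N E_1 :: real
  assumes M: "prob_space M"
    and theta: "\<theta> > 0" and p1: "0 < p1" "p1 < 1"
    and s_eta: "s_eta > 0" and s_nu: "s_nu > 0" and PT: "P_T > 0"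
    and K: "K \<ge> 0" and N: "N \<ge> 1"
    and hd_rv: "\<And>i. hdiff i \<in> borel_measurable M"
    and hd_indep: "prob_space.indep_vars M (\<lambda>_. borel) hdiff UNIV"
    and hd_ident: "\<And>i. distr M borel (hdiff i) = distr M borel (hdiff (0, 0))"
    and hd_mean: "integrable M (hdiff (0, 0))" "integral\<^sup>L M (hdiff (0, 0)) = 0"
    and hd_var: "integrable M (\<lambda>\<omega>. (cmod (hdiff (0, 0) \<omega>))\<^sup>2)"
                "integral\<^sup>L M (\<lambda>\<omega>. (cmod (hdiff (0, 0) \<omega>))\<^sup>2) = 1"
  defines "z \<equiv> (P_T / s_nu) / (p1 * (\<theta>\<^sup>2 / s_eta) + 1)"
    and "\<zeta> \<equiv> 1 / (integral\<^sup>L M (\<lambda>\<omega>. cmod (complex_of_real (sqrt (K / (K + 1))) + hdiff (0, 0) \<omega> / complex_of_real (sqrt (K + 1)))))\<^sup>2"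
    and "E_AWGN \<equiv> (1 / 8) * ((P_T / s_nu) * (\<theta>\<^sup>2 / s_eta) / ((P_T / s_nu) + p1 * (\<theta>\<^sup>2 / s_eta) + 1))"
    and "\<Lambda> \<equiv> \<lambda>n L \<omega>. (\<theta>\<^sup>2 / 8) * (1 / real L) *
                  csis_opt_value n L s_eta s_nu (P_T / (p1 * \<theta>\<^sup>2 + s_eta))
                    (\<lambda>a b. complex_of_real (sqrt (K / (K + 1))) + hdiff (a, b) \<omega> / complex_of_real (sqrt (K + 1)))"
  assumes E_N: "conv_in_prob M (\<Lambda> N) E_N"
    and E_1: "conv_in_prob M (\<Lambda> 1) E_1"
  shows "E_N / E_1 \<le> \<zeta> * (E_N / E_AWGN)
       \<and> \<zeta> * (E_N / E_AWGN)
           \<le> \<zeta> * min (real N * (z + 1) / (real N * z + 1)) ((z + 1) * (real N * K + 1) / (K + 1))"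
proof -
  interpret rician_channel M hdiff K
    by (intro rician_channel.intro rician_channel_axioms.intro M) (use assms(8-) in auto)
  define P where "P = P_T / (p1 * \<theta>\<^sup>2 + s_eta)"
  define \<mu> where "\<mu> = integral\<^sup>L M (\<lambda>\<omega>. cmod (h (0, 0) \<omega>))"
  define c where "c = (real N * K + 1) / (K + 1)"
  have den: "p1 * \<theta>\<^sup>2 + s_eta > 0" using p1 theta s_eta by (intro add_nonneg_pos) auto
  have P: "P > 0" unfolding P_def using PT den by simp
  have \<Lambda>: "\<Lambda> = Lambda \<theta> s_eta s_nu P" unfolding \<Lambda>_def Lambda_def P_def h_def gain_def los_def by simp
  have \<zeta>: "\<zeta> = 1 / \<mu>\<^sup>2" unfolding \<zeta>_def \<mu>_def h_def gain_def los_def by simp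
  have AWGN: "E_AWGN = \<theta>\<^sup>2 / 8 * (P / (s_eta * P + s_nu))" and z: "z = s_eta * P / s_nu"
    using awgn_exponent_eq[OF den s_eta s_nu PT] unfolding E_AWGN_def z_def P_def by simp_all
  have c: "0 \<le> c" "c \<le> real N" unfolding c_def using K N by (auto simp: divide_le_eq algebra_simps)
  have "E_N / E_AWGN \<le> min (real N * (z + 1) / (real N * z + 1)) ((z + 1) * c)"
    using exponent_ratio_le[OF _ s_eta s_nu P c Lambda_limit_le[OF s_eta s_nu less_imp_le[OF P] E_N[unfolded \<Lambda>],
        unfolded los_power2_mixture c_def[symmetric]]] theta
    unfolding AWGN z by simp
  then have second: "\<zeta> * (E_N / E_AWGN) \<le> \<zeta> * min (real N * (z + 1) / (real N * z + 1)) ((z + 1) * (real N * K + 1) / (K + 1))"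
    unfolding \<zeta> c_def by (intro mult_left_mono) (auto simp: mult.commute)
  have "E_AWGN * \<mu>\<^sup>2 \<le> E_1" "E_AWGN * \<mu>\<^sup>2 > 0"
    using Lambda_single_antenna_limit_ge[OF s_eta s_nu _ E_1[unfolded \<Lambda>]] mean_cmod_h_pos P theta s_eta s_nu
    unfolding AWGN \<mu>_def by (auto simp: field_simps add_pos_pos)
  moreover have "E_N \<ge> 0" using Lambda_limit_nonneg[OF s_eta s_nu _ E_N[unfolded \<Lambda>]] P by simp
  ultimately have first: "E_N / E_1 \<le> \<zeta> * (E_N / E_AWGN)"
    unfolding \<zeta> using divide_left_mono[of "E_AWGN * \<mu>\<^sup>2" E_1 E_N] by (simp add: field_simps)
  with second show ?thesis by simp
qed

end
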